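(* Let $k$ be a field and $A_k$ a $k$-algebra with a $k$-linear involution $a\mapsto a^*$. Let $E$ be a finite-dimensional $A_k$-module with a nondegenerate $k$-bilinear form $b$ satisfying $b(ax,y)=b(x,a^*y)$ for all $a\in A_k$, $x,y\in E$, where either $b$ is alternating, or $b$ is symmetric and $\mathrm{char}(k)\neq2$. Let $E^{\mathrm{ss}}$ be the semisimplification of the $A_k$-module $E$. Then there exists a bilinear form $b'$ on $E^{\mathrm{ss}}$, symmetric if $b$ is symmetric and alternating if $b$ is alternating, such that $b'(ax,y)=b'(x,a^*y)$ for all $a\in A_k$, $x,y\in E^{\mathrm{ss}}$, and such that $b'$ is isomorphic to $b$ as a $k$-bilinear form.
   Context: The semisimplification of a finite-length module is the direct sum of the successive quotients of a Jordan–Hölder filtration; it is well-defined up to isomorphism. *)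

theory Defs
  imports Complex_Main
begin

text \<open>A k-vector space is a type of class
ab_group_add with a scalar multiplication (the whole type is the space).\<close>

definition k_algebra :: "('k::field \<Rightarrow> 'a::ring_1 \<Rightarrow> 'a) \<Rightarrow> bool" where
  "k_algebra sA \<longleftrightarrow> Vector_Spaces.vector_space sA \<and>
     (\<forall>c a b. sA c a * b = sA c (a * b) \<and> a * sA c b = sA c (a * b))"

definition k_involution :: "('k::field \<Rightarrow> 'a::ring_1 \<Rightarrow> 'a) \<Rightarrow> ('a \<Rightarrow> 'a) \<Rightarrow> bool" where
  "k_involution sA invl \<longleftrightarrow> Vector_Spaces.linear sA sA invl \<and>
     (\<forall>a. invl (invl a) = a) \<and> (\<forall>a b. invl (a * b) = invl b * invl a) \<and> invl 1 = 1"

definition alg_module ::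
  "('k::field \<Rightarrow> 'a::ring_1 \<Rightarrow> 'a) \<Rightarrow> ('k \<Rightarrow> 'e::ab_group_add \<Rightarrow> 'e) \<Rightarrow> ('a \<Rightarrow> 'e \<Rightarrow> 'e) \<Rightarrow> bool" where
  "alg_module sA sE act \<longleftrightarrow> Vector_Spaces.vector_space sE \<and>
     (\<forall>x. act 1 x = x) \<and>
     (\<forall>a b x. act (a * b) x = act a (act b x)) \<and>
     (\<forall>a b x. act (a + b) x = act a x + act b x) \<and>
     (\<forall>a x y. act a (x + y) = act a x + act a y) \<and>
     (\<forall>c a x. act (sA c a) x = sE c (act a x)) \<and>
     (\<forall>c a x. act a (sE c x) = sE c (act a x))"

definition fin_dim :: "('k::field \<Rightarrow> 'e::ab_group_add \<Rightarrow> 'e) \<Rightarrow> bool" where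
  "fin_dim sE \<longleftrightarrow> (\<exists>S. finite S \<and> module.span sE S = UNIV)"

definition bilinear_form :: "('k::field \<Rightarrow> 'e::ab_group_add \<Rightarrow> 'e) \<Rightarrow> ('e \<Rightarrow> 'e \<Rightarrow> 'k) \<Rightarrow> bool" where
  "bilinear_form sE b \<longleftrightarrow>
     (\<forall>x y z. b (x + y) z = b x z + b y z) \<and> (\<forall>c x y. b (sE c x) y = c * b x y) \<and>
     (\<forall>x y z. b x (y + z) = b x y + b x z) \<and> (\<forall>c x y. b x (sE c y) = c * b x y)"

definition nondegenerate :: "('e::ab_group_add \<Rightarrow> 'e \<Rightarrow> 'k::field) \<Rightarrow> bool" where
  "nondegenerate b \<longleftrightarrow> (\<forall>x. (\<forall>y. b x y = 0) \<longrightarrow> x = 0) \<and> (\<forall>y. (\<forall>x. b x y = 0) \<longrightarrow> y = 0)"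

definition symmetric_form :: "('e \<Rightarrow> 'e \<Rightarrow> 'k) \<Rightarrow> bool" where
  "symmetric_form b \<longleftrightarrow> (\<forall>x y. b x y = b y x)"

definition alternating_form :: "('e \<Rightarrow> 'e \<Rightarrow> 'k::zero) \<Rightarrow> bool" where
  "alternating_form b \<longleftrightarrow> (\<forall>x. b x x = 0)"

definition adjoint_compatible :: "('a \<Rightarrow> 'e \<Rightarrow> 'e) \<Rightarrow> ('a \<Rightarrow> 'a) \<Rightarrow> ('e \<Rightarrow> 'e \<Rightarrow> 'k) \<Rightarrow> bool" where
  "adjoint_compatible act invl b \<longleftrightarrow> (\<forall>a x y. b (act a x) y = b x (act (invl a) y))"

definition iso_forms ::
  "('k::field \<Rightarrow> 'f::ab_group_add \<Rightarrow> 'f) \<Rightarrow> ('f \<Rightarrow> 'f \<Rightarrow> 'k) \<Rightarrow>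
   ('k \<Rightarrow> 'e::ab_group_add \<Rightarrow> 'e) \<Rightarrow> ('e \<Rightarrow> 'e \<Rightarrow> 'k) \<Rightarrow> bool" where
  "iso_forms sF b' sE b \<longleftrightarrow>
     (\<exists>\<phi>. Vector_Spaces.linear sF sE \<phi> \<and> bij \<phi> \<and> (\<forall>x y. b' x y = b (\<phi> x) (\<phi> y)))"

definition submodule :: "('k::field \<Rightarrow> 'e::ab_group_add \<Rightarrow> 'e) \<Rightarrow> ('a \<Rightarrow> 'e \<Rightarrow> 'e) \<Rightarrow> 'e set \<Rightarrow> bool" where
  "submodule sE act M \<longleftrightarrow> module.subspace sE M \<and> (\<forall>a. \<forall>x\<in>M. act a x \<in> M)"

text \<open>For submodules N \<subseteq> M, the quotient M/N is a simple module iff N \<noteq> M and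
no submodule lies strictly between N and M (correspondence theorem).\<close>
definition simple_quotient :: "('k::field \<Rightarrow> 'e::ab_group_add \<Rightarrow> 'e) \<Rightarrow> ('a \<Rightarrow> 'e \<Rightarrow> 'e) \<Rightarrow> 'e set \<Rightarrow> 'e set \<Rightarrow> bool" where
  "simple_quotient sE act M N \<longleftrightarrow> N \<subset> M \<and>
     \<not> (\<exists>L. submodule sE act L \<and> N \<subset> L \<and> L \<subset> M)"

definition JH_filtration ::
  "('k::field \<Rightarrow> 'e::ab_group_add \<Rightarrow> 'e) \<Rightarrow> ('a \<Rightarrow> 'e \<Rightarrow> 'e) \<Rightarrow> nat \<Rightarrow> (nat \<Rightarrow> 'e set) \<Rightarrow> bool" where
  "JH_filtration sE act n Es \<longleftrightarrow> Es 0 = {0} \<and> Es n = UNIV \<and>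
     (\<forall>i\<le>n. submodule sE act (Es i)) \<and>
     (\<forall>i<n. simple_quotient sE act (Es (Suc i)) (Es i))"

text \<open>P (a submodule of F) is isomorphic, as A-module, to the quotient M/N: there is a
surjective A-linear map M \<rightarrow> P with kernel N (first isomorphism theorem).\<close>
definition iso_to_quotient ::
  "('k::field \<Rightarrow> 'e::ab_group_add \<Rightarrow> 'e) \<Rightarrow> ('a \<Rightarrow> 'e \<Rightarrow> 'e) \<Rightarrow>
   ('k \<Rightarrow> 'f::ab_group_add \<Rightarrow> 'f) \<Rightarrow> ('a \<Rightarrow> 'f \<Rightarrow> 'f) \<Rightarrow> 'f set \<Rightarrow> 'e set \<Rightarrow> 'e set \<Rightarrow> bool" where
  "iso_to_quotient sE actE sF actF P M N \<longleftrightarrow>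
     (\<exists>\<pi>. (\<forall>x\<in>M. \<forall>y\<in>M. \<pi> (x + y) = \<pi> x + \<pi> y) \<and>
          (\<forall>c. \<forall>x\<in>M. \<pi> (sE c x) = sF c (\<pi> x)) \<and>
          (\<forall>a. \<forall>x\<in>M. \<pi> (actE a x) = actF a (\<pi> x)) \<and>
          \<pi> ` M = P \<and> {x\<in>M. \<pi> x = 0} = N)"

definition internal_direct_sum ::
  "('k::field \<Rightarrow> 'f::ab_group_add \<Rightarrow> 'f) \<Rightarrow> ('a \<Rightarrow> 'f \<Rightarrow> 'f) \<Rightarrow> nat \<Rightarrow> (nat \<Rightarrow> 'f set) \<Rightarrow> bool" where
  "internal_direct_sum sF actF n Fs \<longleftrightarrow>
     (\<forall>i<n. submodule sF actF (Fs i)) \<and>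
     (\<forall>x. \<exists>xs. (\<forall>i<n. xs i \<in> Fs i) \<and> x = (\<Sum>i<n. xs i)) \<and>
     (\<forall>xs. (\<forall>i<n. xs i \<in> Fs i) \<and> (\<Sum>i<n. xs i) = 0 \<longrightarrow> (\<forall>i<n. xs i = 0))"

definition semisimplification ::
  "('k::field \<Rightarrow> 'e::ab_group_add \<Rightarrow> 'e) \<Rightarrow> ('a \<Rightarrow> 'e \<Rightarrow> 'e) \<Rightarrow>
   ('k \<Rightarrow> 'f::ab_group_add \<Rightarrow> 'f) \<Rightarrow> ('a \<Rightarrow> 'f \<Rightarrow> 'f) \<Rightarrow> bool" where
  "semisimplification sE actE sF actF \<longleftrightarrow>
     (\<exists>n Es Fs. JH_filtration sE actE n Es \<and> internal_direct_sum sF actF n Fs \<and>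
        (\<forall>i<n. iso_to_quotient sE actE sF actF (Fs i) (Es (Suc i)) (Es i)))"

end

theory Submission
  imports Defs "HOL-Library.Set_Algebras"
begin

text \<open>Let W be the first nonzero step of the Jordan-Hoelder filtration, a simple submodule, and
  K its orthogonal, again a submodule because b is compatible with the involution. Then either
  W \<inter> K = 0 or W \<subseteq> K. In the first case E is the orthogonal sum of W and K. In the second, a
  totally isotropic subspace U dual to W exists because b is alternating, or symmetric with 2
  invertible; the hyperbolic subspace W + U carries both W and the simple factor E/K, which is
  dual to W, and its orthogonal is a complement of W in K, isomorphic to K/W. In both cases the
  remaining subspace is nondegenerate and the filtration cut down to it has exactly the remaining
  factors. By induction every factor of the semisimplification is thus mapped k-linearly onto
  a subspace of E, these subspaces form a direct sum decomposition of E, and b pulls back to a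
  form compatible with the involution.\<close>

locale sym_alt_form =
  fixes sE :: "'k::field \<Rightarrow> 'e::ab_group_add \<Rightarrow> 'e"
    and b :: "'e \<Rightarrow> 'e \<Rightarrow> 'k"
  assumes vector_space: "Vector_Spaces.vector_space sE"
    and bilinear: "bilinear_form sE b"
    and alternating_or_symmetric: "alternating_form b \<or> (symmetric_form b \<and> (2::'k) \<noteq> 0)"
    and finite_dimensional: "fin_dim sE"
begin

sublocale E: vector_space sE by (rule vector_space)

lemma b_add_left: "b (x + y) z = b x z + b y z"
  and b_add_right: "b x (y + z) = b x y + b x z"
  and b_scale_left: "b (sE c x) y = c * b x y"
  and b_scale_right: "b x (sE c y) = c * b x y"
  using bilinear unfolding bilinear_form_def by auto

lemma additive_left: "additive (\<lambda>x. b x y)" and additive_right: "additive (b x)"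
  by unfold_locales (simp_all add: b_add_left b_add_right)

lemma b_zero_left [simp]: "b 0 y = 0" and b_zero_right [simp]: "b x 0 = 0"
  using additive.zero[OF additive_left] additive.zero[OF additive_right] .

lemma b_diff_left: "b (x - y) z = b x z - b y z" and b_diff_right: "b x (y - z) = b x y - b x z"
  using additive.diff[OF additive_left] additive.diff[OF additive_right] .

lemma b_sum_left: "b (sum f A) y = (\<Sum>i\<in>A. b (f i) y)"
  and b_sum_right: "b x (sum f A) = (\<Sum>i\<in>A. b x (f i))"
  using additive.sum[OF additive_left] additive.sum[OF additive_right] .

lemmas b_simps = b_add_left b_add_right b_scale_left b_scale_right
  b_diff_left b_diff_right b_sum_left b_sum_right

definition form_sign :: 'k where
  "form_sign = (if alternating_form b then - 1 else 1)"

lemma b_swap: "b y x = form_sign * b x y"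
proof (cases "alternating_form b")
  case True
  then have "b (x + y) (x + y) = 0" "b x x = 0" "b y y = 0"
    unfolding alternating_form_def by auto
  then have "b x y + b y x = 0" by (simp add: b_add_left b_add_right add.commute)
  then show ?thesis using True unfolding form_sign_def by (simp add: eq_neg_iff_add_eq_0 add.commute)
next
  case False
  then show ?thesis using alternating_or_symmetric unfolding form_sign_def symmetric_form_def by auto
qed

lemma orthogonal_commute: "b x y = 0 \<longleftrightarrow> b y x = 0"
  using b_swap[of x y] b_swap[of y x] by auto

lemma independent_finite: "E.independent B \<Longrightarrow> finite B"
  using finite_dimensional E.independent_span_bound unfolding fin_dim_def by blast

lemma span_orthogonal: "w \<in> E.span B \<Longrightarrow> (\<And>v. v \<in> B \<Longrightarrow> b v y = 0) \<Longrightarrow> b w y = 0"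
  by (induction rule: E.span_induct_alt) (simp_all add: b_add_left b_scale_left)

lemma exists_functional_separating:
  assumes "E.subspace L" "y \<notin> L"
  shows "\<exists>f. additive f \<and> (\<forall>c x. f (sE c x) = c * f x) \<and> (\<forall>x\<in>L. f x = 0) \<and> f y = (1::'k)"
proof -
  obtain B0 where B0: "B0 \<subseteq> L" "E.independent B0" "L \<subseteq> E.span B0"
    using E.maximal_independent_subset[of L] by blast
  have y: "y \<notin> E.span B0" using B0(1) assms E.span_minimal by blast
  interpret P: vector_space_pair sE "(*) :: 'k \<Rightarrow> 'k \<Rightarrow> 'k"
    by unfold_locales (auto simp: algebra_simps)
  obtain g where g: "Vector_Spaces.linear sE (*) g" "\<forall>x\<in>insert y B0. g x = of_bool (x = y)"
    using P.linear_independent_extend[OF E.independent_insertI[OF y B0(2)], of "\<lambda>x. of_bool (x = y)"]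
    by blast
  have g_add: "g (x + z) = g x + g z" and g_scale: "g (sE c x) = c * g x" for c x z
    using g(1) unfolding Vector_Spaces.linear_iff by auto
  have "g x = 0" if "x \<in> E.span B0" for x
    using that
  proof (induction rule: E.span_induct_alt)
    case base then show ?case using g_scale[of 0 0] by simp
  next
    case (step c x z) then show ?case using g B0(1) assms(2) by (auto simp: g_add g_scale)
  qed
  then show ?thesis using B0(3) g(2) g_scale by (intro exI[of _ g]) (auto intro: additive.intro g_add)
qed

lemma exists_dual_family:
  assumes Y: "E.subspace Y" and nondeg: "\<And>x. x \<in> Y \<Longrightarrow> (\<forall>y\<in>Y. b x y = 0) \<Longrightarrow> x = 0"
    and B: "finite B" "B \<subseteq> Y" "E.independent B"
  shows "\<exists>u. (\<forall>v\<in>B. u v \<in> Y) \<and> (\<forall>v\<in>B. \<forall>v'\<in>B. b v (u v') = of_bool (v = v'))"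
  using B
proof (induction B rule: finite_induct)
  case empty then show ?case by auto
next
  case (insert v0 B)
  have v0: "v0 \<notin> E.span B" "v0 \<in> Y" and BY: "B \<subseteq> Y"
    using insert(2,4,5) E.independent_insert by auto
  obtain u where u: "\<forall>v\<in>B. u v \<in> Y" "\<forall>v\<in>B. \<forall>v'\<in>B. b v (u v') = of_bool (v = v')"
    using insert.IH insert(5) BY E.independent_mono by blast
  have "\<exists>z\<in>Y. (\<forall>v\<in>B. b v z = 0) \<and> b v0 z \<noteq> 0"
  proof (rule ccontr)
    assume none: "\<not> ?thesis"
    define w where "w = v0 - (\<Sum>v\<in>B. sE (b v0 (u v)) v)"
    have "b w y = 0" if y: "y \<in> Y" for y
    proof -
      define y' where "y' = y - (\<Sum>v\<in>B. sE (b v y) (u v))"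
      have "y' \<in> Y" unfolding y'_def
        using Y y u(1) by (intro E.subspace_diff E.subspace_sum E.subspace_scale) auto
      moreover have "\<forall>v\<in>B. b v y' = 0"
        unfolding y'_def using u(2) insert(1) by (simp add: b_simps)
      ultimately have "b v0 y' = 0" using none by blast
      then show ?thesis unfolding w_def y'_def by (simp add: b_simps mult.commute)
    qed
    moreover have "w \<in> Y" unfolding w_def
      using Y v0 BY by (intro E.subspace_diff E.subspace_sum E.subspace_scale) auto
    ultimately have "w = 0" using nondeg by blast
    then have "v0 = (\<Sum>v\<in>B. sE (b v0 (u v)) v)" unfolding w_def by simp
    also have "\<dots> \<in> E.span B" by (intro E.span_sum E.span_scale E.span_base)
    finally show False using v0 by simp
  qed
  then obtain z where z: "z \<in> Y" "\<forall>v\<in>B. b v z = 0" "b v0 z \<noteq> 0" by blast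
  define z1 where "z1 = sE (1 / b v0 z) z"
  have z1: "z1 \<in> Y" "\<forall>v\<in>B. b v z1 = 0" "b v0 z1 = 1"
    unfolding z1_def using z Y by (auto simp: b_scale_right E.subspace_scale)
  define u' where "u' v = (if v = v0 then z1 else u v - sE (b v0 (u v)) z1)" for v
  have "b v (u' v') = of_bool (v = v')" if "v \<in> insert v0 B" "v' \<in> insert v0 B" for v v'
    using that z1 u(2) insert(2) unfolding u'_def by (auto simp: b_diff_right b_scale_right)
  moreover have "u' v \<in> Y" if "v \<in> insert v0 B" for v
    using that z1 u(1) Y unfolding u'_def by (auto intro!: E.subspace_diff E.subspace_scale)
  ultimately show ?case by blast
qed

lemma exists_cancelling_matrix:
  fixes u :: "'i \<Rightarrow> 'e" and B :: "'i set"
  assumes "finite B"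
  shows "\<exists>\<alpha>. \<forall>v\<in>B. \<forall>v'\<in>B. b (u v) (u v') + form_sign * \<alpha> v' v + \<alpha> v v' = 0"
proof (cases "alternating_form b")
  case True
  then have sign: "form_sign = - 1" unfolding form_sign_def by simp
  obtain r :: "'i \<Rightarrow> nat" where r: "inj_on r B" using assms finite_imp_inj_to_nat_seg by blast
  define \<alpha> where "\<alpha> v v' = (if r v < r v' then - b (u v) (u v') else 0)" for v v'
  have "b (u v) (u v') + form_sign * \<alpha> v' v + \<alpha> v v' = 0" if vv': "v \<in> B" "v' \<in> B" for v v'
  proof -
    consider "r v < r v'" | "r v' < r v" | "v = v'"
      using r vv' by (metis inj_on_eq_iff linorder_neqE_nat)
    then show ?thesis
    proof cases
      case 3
      then show ?thesis using True unfolding \<alpha>_def alternating_form_def by simp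
    qed (use b_swap[of "u v" "u v'"] in \<open>auto simp: \<alpha>_def sign\<close>)
  qed
  then show ?thesis by blast
next
  case False
  then have "form_sign = 1" "(2::'k) \<noteq> 0"
    using alternating_or_symmetric unfolding form_sign_def by auto
  then have "b (u v) (u v') + form_sign * (- b (u v') (u v) / 2) + (- b (u v) (u v') / 2) = 0" for v v'
    using b_swap[of "u v" "u v'"] by (simp add: field_simps)
  then show ?thesis by (intro exI[of _ "\<lambda>v v'. - b (u v) (u v') / 2"]) blast
qed

text \<open>Adding to each u v a combination S v of the isotropic family B changes b (u v) (u v')
  by \<alpha> v v' + form_sign * \<alpha> v' v.\<close>
lemma exists_isotropic_dual_family:
  assumes Y: "E.subspace Y" and B: "finite B" "B \<subseteq> Y"
    and isotropic: "\<forall>v\<in>B. \<forall>v'\<in>B. b v v' = 0"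
    and u: "\<forall>v\<in>B. u v \<in> Y" "\<forall>v\<in>B. \<forall>v'\<in>B. b v (u v') = of_bool (v = v')"
  shows "\<exists>u'. (\<forall>v\<in>B. u' v \<in> Y) \<and> (\<forall>v\<in>B. \<forall>v'\<in>B. b v (u' v') = of_bool (v = v'))
     \<and> (\<forall>v\<in>B. \<forall>v'\<in>B. b (u' v) (u' v') = 0)"
proof -
  obtain \<alpha> where \<alpha>: "\<forall>v\<in>B. \<forall>v'\<in>B. b (u v) (u v') + form_sign * \<alpha> v' v + \<alpha> v v' = 0"
    using exists_cancelling_matrix[OF B(1)] by blast
  define S where "S v = (\<Sum>v1\<in>B. sE (\<alpha> v v1) v1)" for v
  have S_Y: "S v \<in> Y" for v
    unfolding S_def using Y B(2) by (intro E.subspace_sum E.subspace_scale) auto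
  have B_S: "b w (S v) = 0" if "w \<in> B" for w v
    unfolding S_def using isotropic that by (simp add: b_simps)
  have S_S: "b (S v) (S v') = 0" for v v'
    unfolding S_def[of v] by (simp add: b_simps B_S)
  have S_u: "b (S v) (u v') = \<alpha> v v'" if "v' \<in> B" for v v'
    unfolding S_def using u(2) that B(1) by (simp add: b_simps)
  have u_S: "b (u v) (S v') = form_sign * \<alpha> v' v" if "v \<in> B" for v v'
  proof -
    have "b (u v) (S v') = (\<Sum>v2\<in>B. \<alpha> v' v2 * (form_sign * b v2 (u v)))"
      unfolding S_def by (simp add: b_simps flip: b_swap)
    also have "\<dots> = form_sign * \<alpha> v' v"
      using u(2) that B(1) by (simp add: mult.left_commute flip: sum_distrib_left)
    finally show ?thesis .
  qed
  define u' where "u' v = u v + S v" for v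
  have "b (u' v) (u' v') = 0" if "v \<in> B" "v' \<in> B" for v v'
    using \<alpha> u_S S_u S_S that unfolding u'_def by (simp add: b_add_left b_add_right add_ac)
  moreover have "u' v \<in> Y" if "v \<in> B" for v
    unfolding u'_def using u(1) S_Y Y E.subspace_add that by blast
  moreover have "b v (u' v') = of_bool (v = v')" if "v \<in> B" "v' \<in> B" for v v'
    unfolding u'_def using u(2) B_S that by (simp add: b_add_right)
  ultimately show ?thesis by blast
qed

end

context vector_space
begin

lemma subspace_set_plus: "subspace A \<Longrightarrow> subspace C \<Longrightarrow> subspace (A + C)"
proof -
  assume "subspace A" "subspace C"
  moreover have "A + C = {x + y |x y. x \<in> A \<and> y \<in> C}" by (auto simp: set_plus_def)
  ultimately show ?thesis using subspace_sums by simp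
qed

lemma subset_set_plus_left: "subspace C \<Longrightarrow> A \<subseteq> A + C"
  using subspace_0 set_plus_intro[of _ A 0 C] by fastforce

lemma subset_set_plus_right: "subspace A \<Longrightarrow> C \<subseteq> A + C"
  using subspace_0 set_plus_intro[of 0 A _ C] by fastforce

lemma set_plus_absorb:
  assumes "subspace A" "subspace C" "C \<subseteq> A" shows "A + (C + D) = A + D"
proof -
  have "A + C = A"
    using assms subset_set_plus_left[of C A] subspace_add[of A] by (blast elim!: set_plus_elim)
  then show ?thesis by (metis add.assoc)
qed

end

locale form_and_factors = sym_alt_form sE b
  for sE :: "'k::field \<Rightarrow> 'e::ab_group_add \<Rightarrow> 'e" and b :: "'e \<Rightarrow> 'e \<Rightarrow> 'k" +
  fixes sF :: "'k \<Rightarrow> 'f::ab_group_add \<Rightarrow> 'f" and actF :: "'a \<Rightarrow> 'f \<Rightarrow> 'f"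
    and invl :: "'a \<Rightarrow> 'a" and Fs :: "nat \<Rightarrow> 'f set"
  assumes invl_invl: "invl (invl a) = a"
begin

definition invariant_subspace :: "'e set \<Rightarrow> ('a \<Rightarrow> 'e \<Rightarrow> 'e) \<Rightarrow> 'e set \<Rightarrow> bool" where
  "invariant_subspace Y act M \<longleftrightarrow> M \<subseteq> Y \<and> E.subspace M \<and> (\<forall>a. \<forall>x\<in>M. act a x \<in> M)"

lemma invariant_subspace_set_plus:
  assumes act_add: "\<And>a x y. x \<in> Y \<Longrightarrow> y \<in> Y \<Longrightarrow> act a (x + y) = act a x + act a y"
    and Y: "E.subspace Y" and A: "invariant_subspace Y act A" and C: "invariant_subspace Y act C"
  shows "invariant_subspace Y act (A + C)"
  unfolding invariant_subspace_def
proof (intro conjI allI ballI)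
  show "A + C \<subseteq> Y" using A C E.subspace_add[OF Y] by (auto simp: invariant_subspace_def set_plus_def)
  show "E.subspace (A + C)" using A C E.subspace_set_plus by (simp add: invariant_subspace_def)
next
  fix a z assume "z \<in> A + C"
  then obtain x y where "z = x + y" "x \<in> A" "y \<in> C" by (rule set_plus_elim)
  moreover have "x \<in> Y" "y \<in> Y" "act a x \<in> A" "act a y \<in> C"
    using A C \<open>x \<in> A\<close> \<open>y \<in> C\<close> by (auto simp: invariant_subspace_def)
  ultimately show "act a z \<in> A + C" using act_add by auto
qed

lemma invariant_subspace_Int:
  "invariant_subspace Y act A \<Longrightarrow> invariant_subspace Y act C \<Longrightarrow> invariant_subspace Y act (A \<inter> C)"
  unfolding invariant_subspace_def using E.subspace_inter by blast

text \<open>The k-linear maps \<psi> t identify the factors Fs t, t \<in> T, with subspaces of Y whose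
  direct sum is Y, and turn the involution on the factors into the adjoint for b.\<close>
definition compatible_decomposition :: "'e set \<Rightarrow> nat set \<Rightarrow> (nat \<Rightarrow> 'f \<Rightarrow> 'e) \<Rightarrow> bool" where
  "compatible_decomposition Y T \<psi> \<longleftrightarrow>
    (\<forall>t\<in>T. \<forall>x\<in>Fs t. \<psi> t x \<in> Y) \<and>
    (\<forall>t\<in>T. \<forall>x\<in>Fs t. \<forall>y\<in>Fs t. \<psi> t (x + y) = \<psi> t x + \<psi> t y) \<and>
    (\<forall>t\<in>T. \<forall>c. \<forall>x\<in>Fs t. \<psi> t (sF c x) = sE c (\<psi> t x)) \<and>
    (\<forall>y\<in>Y. \<exists>xs. (\<forall>t\<in>T. xs t \<in> Fs t) \<and> y = (\<Sum>t\<in>T. \<psi> t (xs t))) \<and>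
    (\<forall>xs. (\<forall>t\<in>T. xs t \<in> Fs t) \<and> (\<Sum>t\<in>T. \<psi> t (xs t)) = 0 \<longrightarrow> (\<forall>t\<in>T. xs t = 0)) \<and>
    (\<forall>s\<in>T. \<forall>t\<in>T. \<forall>a. \<forall>x\<in>Fs s. \<forall>y\<in>Fs t.
      b (\<psi> s (actF a x)) (\<psi> t y) = b (\<psi> s x) (\<psi> t (actF (invl a) y)))"

context
  fixes Y T \<psi> assumes dec: "compatible_decomposition Y T \<psi>"
begin

lemma compatible_decomposition_mem: "t \<in> T \<Longrightarrow> x \<in> Fs t \<Longrightarrow> \<psi> t x \<in> Y"
  and compatible_decomposition_add:
    "t \<in> T \<Longrightarrow> x \<in> Fs t \<Longrightarrow> y \<in> Fs t \<Longrightarrow> \<psi> t (x + y) = \<psi> t x + \<psi> t y"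
  and compatible_decomposition_scale: "t \<in> T \<Longrightarrow> x \<in> Fs t \<Longrightarrow> \<psi> t (sF c x) = sE c (\<psi> t x)"
  and compatible_decomposition_spans:
    "z \<in> Y \<Longrightarrow> \<exists>xs. (\<forall>t\<in>T. xs t \<in> Fs t) \<and> z = (\<Sum>t\<in>T. \<psi> t (xs t))"
  and compatible_decomposition_independent:
    "\<forall>t\<in>T. xs t \<in> Fs t \<Longrightarrow> (\<Sum>t\<in>T. \<psi> t (xs t)) = 0 \<Longrightarrow> t \<in> T \<Longrightarrow> xs t = 0"
  and compatible_decomposition_adjoint: "s \<in> T \<Longrightarrow> t \<in> T \<Longrightarrow> x \<in> Fs s \<Longrightarrow> y \<in> Fs t \<Longrightarrow>
      b (\<psi> s (actF a x)) (\<psi> t y) = b (\<psi> s x) (\<psi> t (actF (invl a) y))"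
  using dec unfolding compatible_decomposition_def by blast+

end

lemma compatible_decomposition_orthogonal_sum:
  assumes decA: "compatible_decomposition A T0 \<psi>a" and decR: "compatible_decomposition R T1 \<psi>r"
    and T: "T0 \<inter> T1 = {}" "finite T0" "finite T1"
    and AR: "E.subspace A" "E.subspace R" "A \<inter> R = {0}" "A + R = Y"
    and orth: "\<forall>x\<in>A. \<forall>y\<in>R. b x y = 0"
    and Fs_invariant: "\<And>t a x. t \<in> T0 \<union> T1 \<Longrightarrow> x \<in> Fs t \<Longrightarrow> actF a x \<in> Fs t"
  shows "compatible_decomposition Y (T0 \<union> T1) (\<lambda>t. if t \<in> T0 then \<psi>a t else \<psi>r t)"
proof -
  let ?\<psi> = "\<lambda>t. if t \<in> T0 then \<psi>a t else \<psi>r t"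
  note A = compatible_decomposition_mem[OF decA] compatible_decomposition_add[OF decA]
    compatible_decomposition_scale[OF decA] compatible_decomposition_adjoint[OF decA]
  note R = compatible_decomposition_mem[OF decR] compatible_decomposition_add[OF decR]
    compatible_decomposition_scale[OF decR] compatible_decomposition_adjoint[OF decR]
  have orth': "\<forall>x\<in>A. \<forall>y\<in>R. b y x = 0" using orth orthogonal_commute by blast
  have in_A: "\<psi>a t x \<in> A" if "t \<in> T0" "x \<in> Fs t" for t x using A(1) that .
  have in_R: "\<psi>r t x \<in> R" if "t \<in> T1" "x \<in> Fs t" for t x using R(1) that .
  have AY: "A \<subseteq> Y" and RY: "R \<subseteq> Y"
    using AR E.subset_set_plus_left[OF AR(2)] E.subset_set_plus_right[OF AR(1)] by blast+
  have split: "(\<Sum>t\<in>T0 \<union> T1. ?\<psi> t (xs t)) = (\<Sum>t\<in>T0. \<psi>a t (xs t)) + (\<Sum>t\<in>T1. \<psi>r t (xs t))"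
    for xs
  proof -
    have "(\<Sum>t\<in>T1. ?\<psi> t (xs t)) = (\<Sum>t\<in>T1. \<psi>r t (xs t))" using T(1) by (intro sum.cong) auto
    then show ?thesis using T by (simp add: sum.union_disjoint)
  qed
  show ?thesis unfolding compatible_decomposition_def
  proof (intro conjI ballI allI impI)
    fix t x assume "t \<in> T0 \<union> T1" "x \<in> Fs t"
    then show "?\<psi> t x \<in> Y" using in_A in_R AY RY by (cases "t \<in> T0") auto
  next
    fix t x y assume "t \<in> T0 \<union> T1" "x \<in> Fs t" "y \<in> Fs t"
    then show "?\<psi> t (x + y) = ?\<psi> t x + ?\<psi> t y" using A(2) R(2) by (cases "t \<in> T0") auto
  next
    fix t c x assume "t \<in> T0 \<union> T1" "x \<in> Fs t"
    then show "?\<psi> t (sF c x) = sE c (?\<psi> t x)" using A(3) R(3) by (cases "t \<in> T0") auto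
  next
    fix y assume "y \<in> Y"
    then obtain a r where ar: "y = a + r" "a \<in> A" "r \<in> R" using AR(4) set_plus_elim by blast
    obtain xa where xa: "\<forall>t\<in>T0. xa t \<in> Fs t" "a = (\<Sum>t\<in>T0. \<psi>a t (xa t))"
      using compatible_decomposition_spans[OF decA ar(2)] by blast
    obtain xr where xr: "\<forall>t\<in>T1. xr t \<in> Fs t" "r = (\<Sum>t\<in>T1. \<psi>r t (xr t))"
      using compatible_decomposition_spans[OF decR ar(3)] by blast
    define xs where "xs t = (if t \<in> T0 then xa t else xr t)" for t
    have "(\<Sum>t\<in>T0. \<psi>a t (xs t)) = a" unfolding xa(2) xs_def by (intro sum.cong) auto
    moreover have "(\<Sum>t\<in>T1. \<psi>r t (xs t)) = r" unfolding xr(2) xs_def using T(1) by (intro sum.cong) auto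
    ultimately have "y = (\<Sum>t\<in>T0 \<union> T1. ?\<psi> t (xs t))" unfolding split ar(1) by simp
    moreover have "\<forall>t\<in>T0 \<union> T1. xs t \<in> Fs t" unfolding xs_def using xa(1) xr(1) by auto
    ultimately show "\<exists>xs. (\<forall>t\<in>T0 \<union> T1. xs t \<in> Fs t) \<and> y = (\<Sum>t\<in>T0 \<union> T1. ?\<psi> t (xs t))"
      by blast
  next
    fix xs t assume xs: "(\<forall>t\<in>T0 \<union> T1. xs t \<in> Fs t) \<and> (\<Sum>t\<in>T0 \<union> T1. ?\<psi> t (xs t)) = 0"
      and t: "t \<in> T0 \<union> T1"
    define a where "a = (\<Sum>t\<in>T0. \<psi>a t (xs t))"
    define r where "r = (\<Sum>t\<in>T1. \<psi>r t (xs t))"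
    have "a \<in> A" unfolding a_def using in_A xs by (intro E.subspace_sum[OF AR(1)]) blast
    moreover have "- r \<in> R" unfolding r_def using in_R xs
      by (intro E.subspace_neg[OF AR(2)] E.subspace_sum[OF AR(2)]) blast
    moreover have "a = - r" using xs split[of xs] unfolding a_def r_def by (simp add: eq_neg_iff_add_eq_0)
    ultimately have a0: "a = 0" using AR(3) by blast
    then have r0: "r = 0" using \<open>a = - r\<close> by simp
    show "xs t = 0"
    proof (cases "t \<in> T0")
      case True
      have "\<forall>t\<in>T0. xs t \<in> Fs t" using xs by blast
      then show ?thesis using compatible_decomposition_independent[OF decA, of xs] a0 True
        unfolding a_def by simp
    next
      case False
      have "\<forall>t\<in>T1. xs t \<in> Fs t" using xs by blast
      then show ?thesis using compatible_decomposition_independent[OF decR, of xs] r0 False t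
        unfolding r_def by simp
    qed
  next
    fix s t a x y assume st: "s \<in> T0 \<union> T1" "t \<in> T0 \<union> T1" and xy: "x \<in> Fs s" "y \<in> Fs t"
    have axy: "actF a x \<in> Fs s" "actF (invl a) y \<in> Fs t" using Fs_invariant st xy by blast+
    show "b (?\<psi> s (actF a x)) (?\<psi> t y) = b (?\<psi> s x) (?\<psi> t (actF (invl a) y))"
    proof (cases "s \<in> T0"; cases "t \<in> T0")
      assume "s \<in> T0" "t \<in> T0"
      then show ?thesis using A(4)[OF _ _ xy] by simp
    next
      assume "s \<in> T0" "t \<notin> T0"
      then show ?thesis using st xy axy in_A in_R orth by simp
    next
      assume "s \<notin> T0" "t \<in> T0"
      then show ?thesis using st xy axy in_A in_R orth' by simp
    next
      assume "s \<notin> T0" "t \<notin> T0"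
      then show ?thesis using st R(4)[OF _ _ xy] by simp
    qed
  qed
qed

end

text \<open>The action act on Y is a parameter: after splitting off an isotropic simple submodule W,
  the induction continues on a complement of W in its orthogonal, carrying the action of the
  quotient of the orthogonal by W, which is not the restriction of the original action.\<close>
locale nondegenerate_filtration = form_and_factors sE b sF actF invl Fs
  for sE :: "'k::field \<Rightarrow> 'e::ab_group_add \<Rightarrow> 'e" and b :: "'e \<Rightarrow> 'e \<Rightarrow> 'k"
    and sF :: "'k \<Rightarrow> 'f::ab_group_add \<Rightarrow> 'f" and actF :: "'a \<Rightarrow> 'f \<Rightarrow> 'f"
    and invl :: "'a \<Rightarrow> 'a" and Fs :: "nat \<Rightarrow> 'f set" +
  fixes Y :: "'e set" and act :: "'a \<Rightarrow> 'e \<Rightarrow> 'e" and m :: nat and G :: "nat \<Rightarrow> 'e set"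
    and I :: "nat set" and \<sigma> :: "nat \<Rightarrow> nat" and \<pi> :: "nat \<Rightarrow> 'e \<Rightarrow> 'f"
  assumes subspace_Y: "E.subspace Y"
    and act_closed: "y \<in> Y \<Longrightarrow> act a y \<in> Y"
    and act_add: "x \<in> Y \<Longrightarrow> y \<in> Y \<Longrightarrow> act a (x + y) = act a x + act a y"
    and act_adjoint: "x \<in> Y \<Longrightarrow> y \<in> Y \<Longrightarrow> b (act a x) y = b x (act (invl a) y)"
    and nondegenerate_Y: "x \<in> Y \<Longrightarrow> \<forall>y\<in>Y. b x y = 0 \<Longrightarrow> x = 0"
    and G_0: "G 0 = {0}" and G_m: "G m = Y"
    and G_invariant: "i \<le> m \<Longrightarrow> invariant_subspace Y act (G i)"
    and G_Suc: "i < m \<Longrightarrow> G i \<subseteq> G (Suc i)"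
    and G_simple: "i < m \<Longrightarrow> invariant_subspace Y act L \<Longrightarrow> G i \<subset> L \<Longrightarrow> L \<subset> G (Suc i) \<Longrightarrow> False"
    and I_steps: "I = {i. i < m \<and> G (Suc i) \<noteq> G i}"
    and inj_\<sigma>: "inj_on \<sigma> I"
    and \<pi>_add: "i \<in> I \<Longrightarrow> x \<in> G (Suc i) \<Longrightarrow> y \<in> G (Suc i) \<Longrightarrow> \<pi> i (x + y) = \<pi> i x + \<pi> i y"
    and \<pi>_scale: "i \<in> I \<Longrightarrow> x \<in> G (Suc i) \<Longrightarrow> \<pi> i (sE c x) = sF c (\<pi> i x)"
    and \<pi>_act: "i \<in> I \<Longrightarrow> x \<in> G (Suc i) \<Longrightarrow> \<pi> i (act a x) = actF a (\<pi> i x)"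
    and \<pi>_image: "i \<in> I \<Longrightarrow> \<pi> i ` G (Suc i) = Fs (\<sigma> i)"
    and \<pi>_kernel: "i \<in> I \<Longrightarrow> {x\<in>G (Suc i). \<pi> i x = 0} = G i"
begin

lemma G_subspace: "i \<le> m \<Longrightarrow> E.subspace (G i)"
  and G_subset_Y: "i \<le> m \<Longrightarrow> G i \<subseteq> Y"
  and G_act: "i \<le> m \<Longrightarrow> x \<in> G i \<Longrightarrow> act a x \<in> G i"
  using G_invariant unfolding invariant_subspace_def by blast+

lemma G_mono: "i \<le> i' \<Longrightarrow> i' \<le> m \<Longrightarrow> G i \<subseteq> G i'"
proof (induction i' rule: dec_induct)
  case (step n)
  then show ?case using G_Suc[of n] by auto
qed simp

lemma finite_I: "finite I" and I_less_m: "i \<in> I \<Longrightarrow> i < m"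
  using I_steps by auto

lemma Y_trivial_if_I_empty: "I = {} \<Longrightarrow> Y = {0}"
proof -
  assume "I = {}"
  then have "i \<le> m \<Longrightarrow> G i = {0}" for i
    using G_0 I_steps by (induction i) auto
  then show "Y = {0}" using G_m by auto
qed

lemma Fs_invariant:
  assumes i: "i \<in> I" and x: "x \<in> Fs (\<sigma> i)" shows "actF a x \<in> Fs (\<sigma> i)"
proof -
  obtain g where g: "g \<in> G (Suc i)" "x = \<pi> i g" using \<pi>_image[OF i] x by blast
  then have "act a g \<in> G (Suc i)" using G_act I_less_m[OF i] by (simp add: Suc_le_eq)
  then have "\<pi> i (act a g) \<in> Fs (\<sigma> i)" unfolding \<pi>_image[OF i, symmetric] by (rule imageI)
  then show ?thesis using \<pi>_act[OF i g(1)] g(2) by simp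
qed

lemma \<pi>_diff: "i \<in> I \<Longrightarrow> x \<in> G (Suc i) \<Longrightarrow> y \<in> G (Suc i) \<Longrightarrow> \<pi> i (x - y) = \<pi> i x - \<pi> i y"
  using \<pi>_add[of i "x - y" y] E.subspace_diff[OF G_subspace[of "Suc i"]] I_less_m[of i]
  by (simp add: Suc_le_eq eq_diff_eq)

lemma \<pi>_zero: "i \<in> I \<Longrightarrow> \<pi> i 0 = 0"
  using \<pi>_diff[of i 0 0] E.subspace_0[OF G_subspace[of "Suc i"]] I_less_m[of i] by simp

end

locale nontrivial_filtration = nondegenerate_filtration +
  assumes I_nonempty: "I \<noteq> {}"
begin

definition i0 where "i0 = Min I"

lemma i0_in_I: "i0 \<in> I" and i0_le: "i \<in> I \<Longrightarrow> i0 \<le> i" and i0_less_m: "i0 < m"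
  using finite_I I_nonempty I_less_m unfolding i0_def by auto

lemma G_below_i0: "i \<le> i0 \<Longrightarrow> G i = {0}"
proof (induction i)
  case (Suc i)
  then have "i \<notin> I" using i0_le[of i] by auto
  then show ?case using Suc I_steps i0_less_m by auto
qed (simp add: G_0)

definition W where "W = G (Suc i0)"

lemma W_invariant: "invariant_subspace Y act W"
  unfolding W_def using G_invariant i0_less_m by simp

lemma W_subspace: "E.subspace W" and W_subset_Y: "W \<subseteq> Y" and W_act: "x \<in> W \<Longrightarrow> act a x \<in> W"
  using W_invariant unfolding invariant_subspace_def by blast+

lemma W_nonzero: "W \<noteq> {0}"
  using i0_in_I I_steps G_below_i0[of i0] unfolding W_def by auto

lemma W_simple: "invariant_subspace Y act M \<Longrightarrow> M \<subseteq> W \<Longrightarrow> M = {0} \<or> M = W"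
proof (rule ccontr)
  assume M: "invariant_subspace Y act M" "M \<subseteq> W" and "\<not> (M = {0} \<or> M = W)"
  moreover have "0 \<in> M" using M(1) E.subspace_0 unfolding invariant_subspace_def by blast
  ultimately have "G i0 \<subset> M" "M \<subset> G (Suc i0)" using G_below_i0[of i0] unfolding W_def by auto
  then show False using G_simple[OF i0_less_m M(1)] by blast
qed

definition B where "B = (SOME B. B \<subseteq> W \<and> E.independent B \<and> W \<subseteq> E.span B)"

lemma B_basis: "B \<subseteq> W" "E.independent B" "W \<subseteq> E.span B"
proof -
  obtain B0 where "B0 \<subseteq> W" "E.independent B0" "W \<subseteq> E.span B0"
    by (rule E.maximal_independent_subset[of W])
  then have "\<exists>B. B \<subseteq> W \<and> E.independent B \<and> W \<subseteq> E.span B" by blast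
  then have "B \<subseteq> W \<and> E.independent B \<and> W \<subseteq> E.span B" unfolding B_def by (rule someI_ex)
  then show "B \<subseteq> W" "E.independent B" "W \<subseteq> E.span B" by auto
qed

lemma finite_B: "finite B" using independent_finite B_basis(2) .

lemma B_subset_Y: "B \<subseteq> Y" using B_basis(1) W_subset_Y by blast

definition u where
  "u = (SOME u. (\<forall>v\<in>B. u v \<in> Y) \<and> (\<forall>v\<in>B. \<forall>v'\<in>B. b v (u v') = of_bool (v = v')))"

lemma u_mem: "v \<in> B \<Longrightarrow> u v \<in> Y" and b_B_u: "v \<in> B \<Longrightarrow> v' \<in> B \<Longrightarrow> b v (u v') = of_bool (v = v')"
proof -
  have "\<exists>u. (\<forall>v\<in>B. u v \<in> Y) \<and> (\<forall>v\<in>B. \<forall>v'\<in>B. b v (u v') = of_bool (v = v'))"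
    using exists_dual_family[OF subspace_Y nondegenerate_Y finite_B B_subset_Y B_basis(2)] .
  then have "(\<forall>v\<in>B. u v \<in> Y) \<and> (\<forall>v\<in>B. \<forall>v'\<in>B. b v (u v') = of_bool (v = v'))"
    unfolding u_def by (rule someI_ex)
  then show "v \<in> B \<Longrightarrow> u v \<in> Y" "v \<in> B \<Longrightarrow> v' \<in> B \<Longrightarrow> b v (u v') = of_bool (v = v')"
    by blast+
qed

definition K where "K = {y\<in>Y. \<forall>w\<in>W. b w y = 0}"

lemma K_subset_Y: "K \<subseteq> Y" unfolding K_def by blast

lemma K_orthogonal_W: "k \<in> K \<Longrightarrow> w \<in> W \<Longrightarrow> b k w = 0" and W_orthogonal_K: "w \<in> W \<Longrightarrow> k \<in> K \<Longrightarrow> b w k = 0"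
  unfolding K_def using orthogonal_commute by blast+

lemma K_iff_orthogonal_B: "y \<in> Y \<Longrightarrow> y \<in> K \<longleftrightarrow> (\<forall>v\<in>B. b v y = 0)"
  unfolding K_def using B_basis(1,3) span_orthogonal by blast

lemma K_subspace: "E.subspace K"
  unfolding E.subspace_def K_def
  using subspace_Y E.subspace_0 E.subspace_add E.subspace_scale by (auto simp: b_add_right b_scale_right)

lemma K_act: "y \<in> K \<Longrightarrow> act a y \<in> K"
proof -
  assume y: "y \<in> K"
  have "b w (act a y) = 0" if "w \<in> W" for w
  proof -
    have "w \<in> Y" "y \<in> Y" using that W_subset_Y y K_subset_Y by blast+
    then have "b w (act a y) = b (act (invl a) w) y"
      using act_adjoint[of w y "invl a"] by (simp add: invl_invl)
    then show ?thesis using y W_act[OF that] unfolding K_def by simp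
  qed
  then show ?thesis using y act_closed unfolding K_def by blast
qed

lemma K_invariant: "invariant_subspace Y act K"
  unfolding invariant_subspace_def using K_subset_Y K_subspace K_act by blast

lemma K_neq_Y: "K \<noteq> Y"
proof
  assume "K = Y"
  then have "w = 0" if "w \<in> W" for w
    using nondegenerate_Y[of w] that W_subset_Y W_orthogonal_K by blast
  then show False using W_nonzero W_subspace E.subspace_0 by blast
qed

lemma residual_in_K: "y \<in> Y \<Longrightarrow> y - (\<Sum>v\<in>B. sE (b v y) (u v)) \<in> K"
proof -
  assume y: "y \<in> Y"
  have "y - (\<Sum>v\<in>B. sE (b v y) (u v)) \<in> Y"
    using subspace_Y y u_mem by (intro E.subspace_diff E.subspace_sum E.subspace_scale) auto
  moreover have "b v' (y - (\<Sum>v\<in>B. sE (b v y) (u v))) = 0" if "v' \<in> B" for v'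
    using that b_B_u finite_B by (simp add: b_simps)
  ultimately show ?thesis using K_iff_orthogonal_B by blast
qed

text \<open>Y/K is dual to the simple module W: if an invariant L strictly containing K were not
  all of Y, a functional vanishing on L would be represented by a nonzero vector of W
  orthogonal to L, whereas the vectors of W orthogonal to L form a proper submodule of W.\<close>
lemma K_maximal:
  assumes L: "invariant_subspace Y act L" "K \<subseteq> L" "L \<noteq> K"
  shows "L = Y"
proof (rule ccontr)
  assume "L \<noteq> Y"
  have LY: "L \<subseteq> Y" and L_subspace: "E.subspace L" and L_act: "\<And>a x. x \<in> L \<Longrightarrow> act a x \<in> L"
    using L(1) unfolding invariant_subspace_def by blast+
  define WL where "WL = {w\<in>W. \<forall>l\<in>L. b w l = 0}"
  have "act a w \<in> WL" if "w \<in> WL" for a w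
  proof -
    have "b (act a w) l = 0" if "l \<in> L" for l
      using act_adjoint[of w l a] \<open>w \<in> WL\<close> that LY W_subset_Y L_act unfolding WL_def by auto
    then show ?thesis using W_act \<open>w \<in> WL\<close> unfolding WL_def by blast
  qed
  moreover have "E.subspace WL"
    unfolding WL_def E.subspace_def
    using W_subspace E.subspace_0 E.subspace_add E.subspace_scale by (auto simp: b_add_left b_scale_left)
  ultimately have "invariant_subspace Y act WL"
    unfolding invariant_subspace_def using W_subset_Y unfolding WL_def by blast
  moreover obtain l w where "l \<in> L" "w \<in> W" "b w l \<noteq> 0" using L(2,3) LY unfolding K_def by blast
  ultimately have WL0: "WL = {0}" using W_simple[of WL] unfolding WL_def by blast
  obtain y where y: "y \<in> Y" "y \<notin> L" using LY \<open>L \<noteq> Y\<close> by blast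
  obtain f where f: "additive f" "\<And>c x. f (sE c x) = c * f x" "\<And>x. x \<in> L \<Longrightarrow> f x = 0" "f y = 1"
    using exists_functional_separating[OF L_subspace y(2)] by blast
  have f_expand: "f x = (\<Sum>v\<in>B. b v x * f (u v))" if "x \<in> Y" for x
  proof -
    have "f (x - (\<Sum>v\<in>B. sE (b v x) (u v))) = 0" using residual_in_K[OF that] L(2) f(3) by blast
    then show ?thesis by (simp add: additive.diff[OF f(1)] additive.sum[OF f(1)] f(2))
  qed
  define w0 where "w0 = (\<Sum>v\<in>B. sE (f (u v)) v)"
  have "w0 \<in> W" unfolding w0_def using W_subspace B_basis(1)
    by (intro E.subspace_sum E.subspace_scale) auto
  moreover have "b w0 l = 0" if "l \<in> L" for l
    using f_expand[of l] f(3)[OF that] that LY unfolding w0_def by (auto simp: b_simps mult.commute)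
  ultimately have "w0 = 0" using WL0 unfolding WL_def by blast
  then have "\<forall>v\<in>B. f (u v) = 0" unfolding w0_def
    using E.independentD[OF B_basis(2) finite_B order_refl, where u="\<lambda>v. f (u v)"] by blast
  then show False using f_expand[OF y(1)] f(4) by simp
qed

text \<open>Adding K to the filtration gives a chain from K to Y which, K being maximal, jumps
  exactly once; j is the index of that jump.\<close>
definition L where "L i = G i + K"

lemma L_invariant: "i \<le> m \<Longrightarrow> invariant_subspace Y act (L i)"
  unfolding L_def using invariant_subspace_set_plus[OF act_add subspace_Y G_invariant K_invariant] .

lemma K_subset_L: "i \<le> m \<Longrightarrow> K \<subseteq> L i" and G_subset_L: "i \<le> m \<Longrightarrow> G i \<subseteq> L i"
  unfolding L_def using E.subset_set_plus_left E.subset_set_plus_right G_subspace K_subspace by auto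

lemma L_cases: "i \<le> m \<Longrightarrow> L i = K \<or> L i = Y"
  using K_maximal[OF L_invariant K_subset_L] by blast

lemma L_subset_Y: "i \<le> m \<Longrightarrow> L i \<subseteq> Y"
  using L_invariant unfolding invariant_subspace_def by blast

lemma L_m: "L m = Y" using G_subset_L[of m] G_m L_subset_Y[of m] by auto

lemma L_mono: "i \<le> i' \<Longrightarrow> i' \<le> m \<Longrightarrow> L i \<subseteq> L i'"
  unfolding L_def set_plus_def using G_mono by blast

definition j where "j = (LEAST i. i < m \<and> L (Suc i) = Y)"

lemma j_less_m: "j < m" and L_Suc_j: "L (Suc j) = Y" and L_Suc_below_j: "i < j \<Longrightarrow> L (Suc i) \<noteq> Y"
proof -
  have "m - 1 < m \<and> L (Suc (m - 1)) = Y" using i0_less_m L_m by simp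
  then show "j < m" "L (Suc j) = Y"
    using LeastI[of "\<lambda>i. i < m \<and> L (Suc i) = Y"] unfolding j_def by blast+
  show "i < j \<Longrightarrow> L (Suc i) \<noteq> Y"
    using not_less_Least[of i "\<lambda>i. i < m \<and> L (Suc i) = Y"] \<open>j < m\<close> unfolding j_def by auto
qed

lemma L_upto_j: "i \<le> j \<Longrightarrow> L i = K"
proof (cases i)
  case 0
  then show ?thesis unfolding L_def by (auto simp: G_0 set_plus_def)
next
  case (Suc i')
  then show "i \<le> j \<Longrightarrow> L i = K" using L_Suc_below_j[of i'] L_cases[of i] j_less_m by auto
qed

lemma L_beyond_j: "j < i \<Longrightarrow> i \<le> m \<Longrightarrow> L i = Y"
  using L_mono[of "Suc j" i] L_Suc_j L_subset_Y[of i] by auto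

lemma L_Suc_eq: "i < m \<Longrightarrow> i \<noteq> j \<Longrightarrow> L (Suc i) = L i"
  by (cases "i < j") (simp_all add: L_upto_j L_beyond_j)

lemma j_in_I: "j \<in> I"
  using L_Suc_j L_upto_j[of j] K_neq_Y j_less_m I_steps unfolding L_def by auto

lemma G_j_subset_K: "G j \<subseteq> K" using G_subset_L[of j] L_upto_j[of j] j_less_m by auto

lemma G_Suc_j_plus_K: "G (Suc j) + K = Y" using L_Suc_j unfolding L_def .

lemma G_plus_G_Suc_Int_K:
  assumes "i < m"
  shows "invariant_subspace Y act (G i + (G (Suc i) \<inter> K))"
    and "G i \<subseteq> G i + (G (Suc i) \<inter> K)" and "G i + (G (Suc i) \<inter> K) \<subseteq> G (Suc i)"
proof -
  have "invariant_subspace Y act (G (Suc i) \<inter> K)"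
    using invariant_subspace_Int[OF G_invariant K_invariant] assms by simp
  then show "invariant_subspace Y act (G i + (G (Suc i) \<inter> K))"
    using invariant_subspace_set_plus[OF act_add subspace_Y G_invariant] assms by simp
  show "G i \<subseteq> G i + (G (Suc i) \<inter> K)"
    using E.subset_set_plus_left E.subspace_inter G_subspace K_subspace assms by simp
  show "G i + (G (Suc i) \<inter> K) \<subseteq> G (Suc i)"
    using G_Suc[OF assms] E.subspace_add[OF G_subspace[of "Suc i"]] assms
    by (auto simp: set_plus_def)
qed

lemma G_plus_G_Suc_Int_K_cases:
  assumes "i \<in> I" shows "G i + (G (Suc i) \<inter> K) = G i \<or> G i + (G (Suc i) \<inter> K) = G (Suc i)"
proof (rule ccontr)
  assume "\<not> ?thesis"
  then show False
    using G_simple[of i] G_plus_G_Suc_Int_K[of i] I_less_m[OF assms] by blast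
qed

text \<open>Dually, intersecting with K removes exactly the jump at j: G i \<inter> K jumps at every
  other step of I.\<close>
lemma G_Suc_eq_plus_Int_K:
  assumes i: "i \<in> I" "i \<noteq> j" shows "G (Suc i) = G i + (G (Suc i) \<inter> K)"
proof -
  have im: "i < m" using i I_less_m by blast
  have "G (Suc i) \<subseteq> G i" if eq: "G i + (G (Suc i) \<inter> K) = G i"
  proof
    fix x assume x: "x \<in> G (Suc i)"
    then have "x \<in> L i" using G_subset_L[of "Suc i"] L_Suc_eq[OF im i(2)] im by auto
    then obtain g k where gk: "x = g + k" "g \<in> G i" "k \<in> K" unfolding L_def by (rule set_plus_elim)
    have "k = x - g" using gk by simp
    also have "\<dots> \<in> G (Suc i)"
      using x gk(2) G_Suc[OF im] E.subspace_diff[OF G_subspace[of "Suc i"]] im by auto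
    finally have "k \<in> G (Suc i) \<inter> K" using gk(3) by blast
    then have "k \<in> G i + (G (Suc i) \<inter> K)"
      using E.subset_set_plus_right[OF G_subspace[OF less_imp_le[OF im]]] by blast
    then have "k \<in> G i" using eq by simp
    then show "x \<in> G i" using gk E.subspace_add[OF G_subspace[of i]] im by auto
  qed
  then show ?thesis using G_plus_G_Suc_Int_K_cases[OF i(1)] G_Suc[OF im] i(1) I_steps by auto
qed

lemma G_Suc_j_Int_K: "G (Suc j) \<inter> K \<subseteq> G j"
proof -
  have "G j + (G (Suc j) \<inter> K) \<noteq> G (Suc j)"
  proof
    assume "G j + (G (Suc j) \<inter> K) = G (Suc j)"
    have "G (Suc j) \<subseteq> K"
    proof
      fix x assume "x \<in> G (Suc j)"
      then have "x \<in> G j + (G (Suc j) \<inter> K)" using \<open>G j + (G (Suc j) \<inter> K) = G (Suc j)\<close> by simp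
      then obtain g k where "x = g + k" "g \<in> G j" "k \<in> K" by (auto elim: set_plus_elim)
      then show "x \<in> K" using G_j_subset_K E.subspace_add[OF K_subspace] by blast
    qed
    then have "L (Suc j) \<subseteq> K" unfolding L_def using E.subspace_add[OF K_subspace] by (auto simp: set_plus_def)
    then show False using L_Suc_j K_neq_Y K_subset_Y by blast
  qed
  then have "G j + (G (Suc j) \<inter> K) = G j" using G_plus_G_Suc_Int_K_cases[OF j_in_I] by blast
  then show ?thesis using E.subset_set_plus_right[OF G_subspace[OF less_imp_le[OF j_less_m]]] by blast
qed

lemma W_subset_G: "Suc i0 \<le> i \<Longrightarrow> i \<le> m \<Longrightarrow> W \<subseteq> G i"
  unfolding W_def using G_mono by blast

lemma Suc_i0_le: "i \<in> I - {i0, j} \<Longrightarrow> Suc i0 \<le> i"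
  using i0_le by force

text \<open>The reduction step: on a complement Y' of W in K whose action act' agrees with act
  modulo W, the filtration G i \<inter> Y' has as steps exactly those of G other than i0 and j.\<close>
context
  fixes Y' and act'
  assumes Y'_subspace: "E.subspace Y'" and Y'_subset_K: "Y' \<subseteq> K" and K_subset: "K \<subseteq> W + Y'"
    and W_Int_Y': "W \<inter> Y' = {0}"
    and act'_closed: "y \<in> Y' \<Longrightarrow> act' a y \<in> Y'"
    and act'_mod_W: "y \<in> Y' \<Longrightarrow> act a y - act' a y \<in> W"
    and act'_add: "x \<in> Y' \<Longrightarrow> y \<in> Y' \<Longrightarrow> act' a (x + y) = act' a x + act' a y"
    and act'_adjoint: "x \<in> Y' \<Longrightarrow> y \<in> Y' \<Longrightarrow> b (act' a x) y = b x (act' (invl a) y)"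
    and nondegenerate_Y': "x \<in> Y' \<Longrightarrow> \<forall>y\<in>Y'. b x y = 0 \<Longrightarrow> x = 0"
begin

lemma Y'_subset_Y: "Y' \<subseteq> Y" using Y'_subset_K K_subset_Y by blast

lemma act'_in_G: "i \<le> m \<Longrightarrow> W \<subseteq> G i \<Longrightarrow> x \<in> G i \<Longrightarrow> x \<in> Y' \<Longrightarrow> act' a x \<in> G i"
proof -
  assume i: "i \<le> m" "W \<subseteq> G i" and x: "x \<in> G i" "x \<in> Y'"
  have "act' a x = act a x - (act a x - act' a x)" by simp
  also have "\<dots> \<in> G i"
    using G_act[OF i(1) x(1)] act'_mod_W[OF x(2)] i E.subspace_diff[OF G_subspace[OF i(1)]] by blast
  finally show ?thesis .
qed

lemma G_Int_Y'_invariant: "i \<le> m \<Longrightarrow> invariant_subspace Y' act' (G i \<inter> Y')"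
proof -
  assume i: "i \<le> m"
  have "act' a x \<in> G i" if "x \<in> G i \<inter> Y'" for a x
  proof (cases "i \<le> i0")
    case True
    then have "x = 0" using G_below_i0 that by auto
    then show ?thesis using act'_add[of 0 0 a] E.subspace_0[OF Y'_subspace] E.subspace_0[OF G_subspace[OF i]]
      by simp
  next
    case False
    then show ?thesis using act'_in_G[OF i W_subset_G] that i by auto
  qed
  then show ?thesis
    unfolding invariant_subspace_def using act'_closed E.subspace_inter[OF G_subspace[OF i] Y'_subspace]
    by blast
qed

lemma G_Suc_split: assumes i: "i \<in> I - {i0, j}" shows "G (Suc i) = G i + (G (Suc i) \<inter> Y')"
proof
  have im: "i < m" using i I_less_m by blast
  have W_G: "W \<subseteq> G i" using W_subset_G Suc_i0_le[OF i] im by simp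
  show "G (Suc i) \<subseteq> G i + (G (Suc i) \<inter> Y')"
  proof
    fix x assume "x \<in> G (Suc i)"
    then have "x \<in> G i + (G (Suc i) \<inter> K)" using G_Suc_eq_plus_Int_K[of i] i by auto
    then obtain g k where gk: "x = g + k" "g \<in> G i" "k \<in> G (Suc i) \<inter> K" by (rule set_plus_elim)
    then have "k \<in> W + Y'" using K_subset by blast
    then obtain w y' where wy: "k = w + y'" "w \<in> W" "y' \<in> Y'" by (rule set_plus_elim)
    have "y' = k - w" using wy by simp
    also have "\<dots> \<in> G (Suc i)"
      using gk(3) wy(2) W_G G_Suc[OF im] E.subspace_diff[OF G_subspace[of "Suc i"]] im by auto
    finally have "y' \<in> G (Suc i) \<inter> Y'" using wy by simp
    moreover have "g + w \<in> G i" using gk wy W_G E.subspace_add[OF G_subspace[of i]] im by auto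
    moreover have "x = (g + w) + y'" using gk wy by (simp add: add.assoc)
    ultimately show "x \<in> G i + (G (Suc i) \<inter> Y')" by blast
  qed
  show "G i + (G (Suc i) \<inter> Y') \<subseteq> G (Suc i)"
    using G_Suc[OF im] E.subspace_add[OF G_subspace[of "Suc i"]] im by (auto elim!: set_plus_elim)
qed

lemma G_Int_Y'_step_iff:
  assumes "i < m" shows "G (Suc i) \<inter> Y' \<noteq> G i \<inter> Y' \<longleftrightarrow> i \<in> I - {i0, j}"
proof
  assume ne: "G (Suc i) \<inter> Y' \<noteq> G i \<inter> Y'"
  then have "i \<in> I" using I_steps assms by auto
  moreover have "i \<noteq> i0"
    using ne W_Int_Y' G_below_i0[of i0] E.subspace_0[OF Y'_subspace] unfolding W_def by auto
  moreover have "i \<noteq> j" using ne G_Suc_j_Int_K Y'_subset_K G_Suc[OF assms] by blast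
  ultimately show "i \<in> I - {i0, j}" by blast
next
  assume i: "i \<in> I - {i0, j}"
  show "G (Suc i) \<inter> Y' \<noteq> G i \<inter> Y'"
  proof
    assume eq: "G (Suc i) \<inter> Y' = G i \<inter> Y'"
    have "G (Suc i) \<subseteq> G i"
    proof
      fix x assume "x \<in> G (Suc i)"
      then have "x \<in> G i + (G i \<inter> Y')" using G_Suc_split[OF i] eq by simp
      then obtain g y where "x = g + y" "g \<in> G i" "y \<in> G i \<inter> Y'" by (rule set_plus_elim)
      then show "x \<in> G i" using E.subspace_add[OF G_subspace[of i]] assms by auto
    qed
    then show False using i I_steps G_Suc[OF assms] by auto
  qed
qed

lemma W_plus_invariant:
  assumes L': "invariant_subspace Y' act' L'" shows "invariant_subspace Y act (W + L')"
  unfolding invariant_subspace_def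
proof (intro conjI allI ballI)
  have L'_Y: "L' \<subseteq> Y" and L'_subspace: "E.subspace L'"
    using L' Y'_subset_Y unfolding invariant_subspace_def by blast+
  then show "W + L' \<subseteq> Y"
    using W_subset_Y E.subspace_add[OF subspace_Y] by (blast elim!: set_plus_elim)
  show "E.subspace (W + L')" using E.subspace_set_plus[OF W_subspace L'_subspace] .
next
  fix a x assume "x \<in> W + L'"
  then obtain w l where wl: "x = w + l" "w \<in> W" "l \<in> L'" by (rule set_plus_elim)
  have "w \<in> Y" "l \<in> Y" "l \<in> Y'" using wl W_subset_Y L' Y'_subset_Y unfolding invariant_subspace_def by blast+
  then have "act a x = (act a w + (act a l - act' a l)) + act' a l" using wl act_add by simp
  moreover have "act a w + (act a l - act' a l) \<in> W"
    using W_act wl act'_mod_W[OF \<open>l \<in> Y'\<close>] E.subspace_add[OF W_subspace] by blast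
  moreover have "act' a l \<in> L'" using L' wl(3) unfolding invariant_subspace_def by blast
  ultimately show "act a x \<in> W + L'" using set_plus_intro by metis
qed

lemma G_Int_Y'_simple:
  assumes i: "i < m" and L': "invariant_subspace Y' act' L'" "G i \<inter> Y' \<subset> L'" "L' \<subset> G (Suc i) \<inter> Y'"
  shows False
proof -
  have iI: "i \<in> I - {i0, j}" using G_Int_Y'_step_iff[OF i] L'(2,3) by blast
  have W_G: "W \<subseteq> G i" using W_subset_G Suc_i0_le[OF iI] i by simp
  have L'_Y': "L' \<subseteq> Y'" and L'_subspace: "E.subspace L'"
    using L'(1) unfolding invariant_subspace_def by blast+
  define M where "M = G i + L'"
  have "M = G i + (W + L')"
    unfolding M_def using E.set_plus_absorb[OF G_subspace W_subspace W_G] i by simp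
  then have M_invariant: "invariant_subspace Y act M"
    using invariant_subspace_set_plus[OF act_add subspace_Y G_invariant W_plus_invariant[OF L'(1)]] i
    by simp
  have "G i \<subset> M"
  proof -
    obtain l where l: "l \<in> L'" "l \<notin> G i" using L'(2,3) L'_Y' by blast
    have "G i \<subseteq> M" unfolding M_def using E.subset_set_plus_left[OF L'_subspace] .
    moreover have "l \<in> M"
      unfolding M_def using E.subset_set_plus_right[OF G_subspace[OF less_imp_le[OF i]]] l(1) by blast
    ultimately show ?thesis using l(2) by blast
  qed
  moreover have "M \<subset> G (Suc i)"
  proof -
    have "M \<subseteq> G (Suc i)" unfolding M_def
      using L'(3) G_Suc[OF i] E.subspace_add[OF G_subspace[of "Suc i"]] i by (auto elim!: set_plus_elim)
    moreover obtain y where y: "y \<in> G (Suc i) \<inter> Y'" "y \<notin> L'" using L'(3) by blast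
    have "y \<notin> M"
    proof
      assume "y \<in> M"
      then obtain g l where gl: "y = g + l" "g \<in> G i" "l \<in> L'" unfolding M_def by (rule set_plus_elim)
      then have "g = y - l" by simp
      also have "\<dots> \<in> Y'" using y gl L'_Y' E.subspace_diff[OF Y'_subspace] by blast
      finally have "g \<in> L'" using gl L'(2) by blast
      then show False using gl y E.subspace_add[OF L'_subspace] by simp
    qed
    ultimately show ?thesis using y by blast
  qed
  ultimately show False using G_simple[OF i M_invariant] by blast
qed

lemma nondegenerate_filtration_Int:
  "nondegenerate_filtration sE b sF actF invl Fs Y' act' m (\<lambda>i. G i \<inter> Y') (I - {i0, j}) \<sigma> \<pi>"
proof (intro nondegenerate_filtration.intro[OF form_and_factors_axioms]
    nondegenerate_filtration_axioms.intro)
  show "G 0 \<inter> Y' = {0}" using G_0 E.subspace_0[OF Y'_subspace] by auto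
  show "G m \<inter> Y' = Y'" using G_m Y'_subset_Y by auto
  show "inj_on \<sigma> (I - {i0, j})" using inj_\<sigma> by (rule inj_on_subset) blast
  show "I - {i0, j} = {i. i < m \<and> G (Suc i) \<inter> Y' \<noteq> G i \<inter> Y'}"
    using G_Int_Y'_step_iff I_less_m by blast
  show "G i \<inter> Y' \<subseteq> G (Suc i) \<inter> Y'" if "i < m" for i using G_Suc[OF that] by blast
  show False if "i < m" "invariant_subspace Y' act' L" "G i \<inter> Y' \<subset> L" "L \<subset> G (Suc i) \<inter> Y'" for i L
    using G_Int_Y'_simple that by blast
  fix i assume iI: "i \<in> I - {i0, j}"
  then have i: "i \<in> I" "i < m" using I_less_m by auto
  have W_G: "W \<subseteq> G i" "W \<subseteq> G (Suc i)" using W_subset_G Suc_i0_le[OF iI] i G_Suc by force+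
  show "\<pi> i (act' a x) = actF a (\<pi> i x)" if x: "x \<in> G (Suc i) \<inter> Y'" for a x
  proof -
    have "act' a x \<in> G (Suc i)" using act'_in_G[of "Suc i"] W_G(2) x i by auto
    moreover have "act a x - act' a x \<in> G i" using act'_mod_W[of x a] W_G(1) x by auto
    ultimately have "\<pi> i (act a x - act' a x) = 0" "act a x \<in> G (Suc i)"
      using \<pi>_kernel[OF i(1)] G_Suc[OF i(2)] G_act[of "Suc i" x a] i x by auto
    then show ?thesis using \<pi>_diff[OF i(1)] \<pi>_act[OF i(1)] x \<open>act' a x \<in> G (Suc i)\<close> by auto
  qed
  show "\<pi> i ` (G (Suc i) \<inter> Y') = Fs (\<sigma> i)"
  proof
    show "\<pi> i ` (G (Suc i) \<inter> Y') \<subseteq> Fs (\<sigma> i)" using \<pi>_image[OF i(1)] by blast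
    show "Fs (\<sigma> i) \<subseteq> \<pi> i ` (G (Suc i) \<inter> Y')"
    proof
      fix z assume "z \<in> Fs (\<sigma> i)"
      then obtain x where x: "x \<in> G (Suc i)" "z = \<pi> i x" using \<pi>_image[OF i(1)] by blast
      then have "x \<in> G i + (G (Suc i) \<inter> Y')" using G_Suc_split[OF iI] by simp
      then obtain g y where gy: "x = g + y" "g \<in> G i" "y \<in> G (Suc i) \<inter> Y'" by (rule set_plus_elim)
      then have "g \<in> G (Suc i)" "\<pi> i g = 0" using G_Suc[OF i(2)] \<pi>_kernel[OF i(1)] by auto
      then show "z \<in> \<pi> i ` (G (Suc i) \<inter> Y')" using x gy \<pi>_add[OF i(1)] by auto
    qed
  qed
  show "{x \<in> G (Suc i) \<inter> Y'. \<pi> i x = 0} = G i \<inter> Y'"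
    using \<pi>_kernel[OF i(1)] G_Suc[OF i(2)] by blast
qed (use Y'_subspace act'_closed act'_add act'_adjoint nondegenerate_Y' G_Int_Y'_invariant
       \<pi>_add \<pi>_scale in \<open>auto\<close>)

end

lemma inj_on_\<pi>_i0: "inj_on (\<pi> i0) W"
proof (rule inj_onI)
  fix w1 w2 assume w: "w1 \<in> W" "w2 \<in> W" "\<pi> i0 w1 = \<pi> i0 w2"
  then have "w1 - w2 \<in> {x\<in>G (Suc i0). \<pi> i0 x = 0}"
    using \<pi>_diff[OF i0_in_I] E.subspace_diff[OF W_subspace] unfolding W_def by simp
  then show "w1 = w2" using \<pi>_kernel[OF i0_in_I] G_below_i0[of i0] by simp
qed

lemma \<pi>_i0_image: "\<pi> i0 ` W = Fs (\<sigma> i0)" unfolding W_def using \<pi>_image[OF i0_in_I] .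

definition \<psi>W where "\<psi>W = the_inv_into W (\<pi> i0)"

lemma \<psi>W_mem: "x \<in> Fs (\<sigma> i0) \<Longrightarrow> \<psi>W x \<in> W"
  and \<pi>_\<psi>W: "x \<in> Fs (\<sigma> i0) \<Longrightarrow> \<pi> i0 (\<psi>W x) = x"
  and \<psi>W_\<pi>: "w \<in> W \<Longrightarrow> \<psi>W (\<pi> i0 w) = w"
  unfolding \<psi>W_def using inj_on_\<pi>_i0 \<pi>_i0_image
  by (auto simp: the_inv_into_f_f f_the_inv_into_f the_inv_into_into)

lemma \<psi>W_hom:
  assumes "x \<in> Fs (\<sigma> i0)"
  shows "y \<in> Fs (\<sigma> i0) \<Longrightarrow> \<psi>W (x + y) = \<psi>W x + \<psi>W y"
    and "\<psi>W (sF c x) = sE c (\<psi>W x)"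
    and "\<psi>W (actF a x) = act a (\<psi>W x)"
proof -
  note w = \<psi>W_mem[OF assms] \<pi>_\<psi>W[OF assms]
  show "y \<in> Fs (\<sigma> i0) \<Longrightarrow> \<psi>W (x + y) = \<psi>W x + \<psi>W y"
    using \<pi>_add[OF i0_in_I] w \<psi>W_mem \<pi>_\<psi>W \<psi>W_\<pi> E.subspace_add[OF W_subspace] unfolding W_def
    by metis
  show "\<psi>W (sF c x) = sE c (\<psi>W x)"
    using \<pi>_scale[OF i0_in_I] w \<psi>W_\<pi> E.subspace_scale[OF W_subspace] unfolding W_def by metis
  show "\<psi>W (actF a x) = act a (\<psi>W x)"
    using \<pi>_act[OF i0_in_I] w \<psi>W_\<pi> W_act unfolding W_def by metis
qed

lemma compatible_decomposition_W: "compatible_decomposition W {\<sigma> i0} (\<lambda>t. \<psi>W)"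
  unfolding compatible_decomposition_def
proof (intro conjI ballI allI impI)
  fix y assume "y \<in> W"
  then show "\<exists>xs. (\<forall>t\<in>{\<sigma> i0}. xs t \<in> Fs t) \<and> y = (\<Sum>t\<in>{\<sigma> i0}. \<psi>W (xs t))"
    using \<pi>_i0_image \<psi>W_\<pi> by (intro exI[of _ "\<lambda>t. \<pi> i0 y"]) auto
next
  fix xs t assume "(\<forall>t\<in>{\<sigma> i0}. xs t \<in> Fs t) \<and> (\<Sum>t\<in>{\<sigma> i0}. \<psi>W (xs t)) = 0" "t \<in> {\<sigma> i0}"
  then show "xs t = 0" using \<pi>_\<psi>W \<pi>_zero[OF i0_in_I] by force
next
  fix s t a x y assume "s \<in> {\<sigma> i0}" "t \<in> {\<sigma> i0}" "x \<in> Fs s" "y \<in> Fs t"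
  then show "b (\<psi>W (actF a x)) (\<psi>W y) = b (\<psi>W x) (\<psi>W (actF (invl a) y))"
    using \<psi>W_hom(3) act_adjoint \<psi>W_mem W_subset_Y by (simp add: subset_iff)
qed (use \<psi>W_mem \<psi>W_hom in auto)

lemma \<sigma>_I_split: "\<sigma> ` I = \<sigma> ` {i0, j} \<union> \<sigma> ` (I - {i0, j})"
  using i0_in_I j_in_I by blast

lemma \<sigma>_disjoint: "\<sigma> ` {i0, j} \<inter> \<sigma> ` (I - {i0, j}) = {}"
  using inj_\<sigma> i0_in_I j_in_I unfolding inj_on_def by blast

lemma Fs_\<sigma>_invariant: "t \<in> \<sigma> ` I \<Longrightarrow> x \<in> Fs t \<Longrightarrow> actF a x \<in> Fs t"
  using Fs_invariant by blast

text \<open>The anisotropic case: W is nondegenerate and Y is the orthogonal sum of W and K.\<close>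
context
  assumes W_Int_K: "W \<inter> K = {0}"
begin

lemma j_eq_i0: "j = i0"
proof (rule ccontr)
  assume "j \<noteq> i0"
  then have "G (Suc i0) = G i0 + (G (Suc i0) \<inter> K)" using G_Suc_eq_plus_Int_K[OF i0_in_I] by simp
  also have "\<dots> = {0}" using W_Int_K G_below_i0[of i0] unfolding W_def set_plus_def by auto
  finally show False using W_nonzero unfolding W_def by simp
qed

lemma W_plus_K: "W + K = Y" using G_Suc_j_plus_K j_eq_i0 unfolding W_def by simp

lemma nondegenerate_K: "x \<in> K \<Longrightarrow> \<forall>y\<in>K. b x y = 0 \<Longrightarrow> x = 0"
proof -
  assume x: "x \<in> K" and orth: "\<forall>y\<in>K. b x y = 0"
  have "b x y = 0" if "y \<in> Y" for y
  proof -
    have "y \<in> W + K" using W_plus_K that by simp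
    then obtain w k where "y = w + k" "w \<in> W" "k \<in> K" by (rule set_plus_elim)
    then show ?thesis using orth x K_orthogonal_W by (simp add: b_add_right)
  qed
  then show "x = 0" using nondegenerate_Y x K_subset_Y by blast
qed

lemma nondegenerate_filtration_K:
  "nondegenerate_filtration sE b sF actF invl Fs K act m (\<lambda>i. G i \<inter> K) (I - {i0, j}) \<sigma> \<pi>"
proof (rule nondegenerate_filtration_Int)
  show "K \<subseteq> W + K" using E.subset_set_plus_right[OF W_subspace] .
  show "act a y - act a y \<in> W" for a y using E.subspace_0[OF W_subspace] by simp
qed (use K_subspace W_Int_K K_act act_add act_adjoint subsetD[OF K_subset_Y] nondegenerate_K in auto)

lemma compatible_decomposition_anisotropic:
  assumes "compatible_decomposition K (\<sigma> ` (I - {i0, j})) \<psi>K"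
  shows "\<exists>\<psi>. compatible_decomposition Y (\<sigma> ` I) \<psi>"
proof -
  have T: "\<sigma> ` I = {\<sigma> i0} \<union> \<sigma> ` (I - {i0, j})" using \<sigma>_I_split j_eq_i0 by simp
  have "compatible_decomposition Y ({\<sigma> i0} \<union> \<sigma> ` (I - {i0, j}))
      (\<lambda>t. if t \<in> {\<sigma> i0} then \<psi>W else \<psi>K t)"
    using compatible_decomposition_orthogonal_sum[OF compatible_decomposition_W assms]
      \<sigma>_disjoint j_eq_i0 finite_I W_subspace K_subspace W_Int_K W_plus_K W_orthogonal_K
      Fs_\<sigma>_invariant T by simp
  then show ?thesis using T by auto
qed

end

text \<open>A totally isotropic dual U of W is split off together
  with W; the hyperbolic subspace W + U realises the factors at i0 and j, with the factor at j
  embedded by the projection proj_U, and the induction continues on the orthogonal of W + U,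
  which is a complement of W in K.\<close>
definition u_iso where
  "u_iso = (SOME u'. (\<forall>v\<in>B. u' v \<in> Y) \<and> (\<forall>v\<in>B. \<forall>v'\<in>B. b v (u' v') = of_bool (v = v'))
     \<and> (\<forall>v\<in>B. \<forall>v'\<in>B. b (u' v) (u' v') = 0))"

definition U where "U = E.span (u_iso ` B)"

definition proj_W where "proj_W y = (\<Sum>v\<in>B. sE (b y (u_iso v)) v)"

definition proj_U where "proj_U y = (\<Sum>v\<in>B. sE (b v y) (u_iso v))"

definition Y_rest where "Y_rest = {y\<in>Y. (\<forall>v\<in>B. b v y = 0) \<and> (\<forall>v\<in>B. b y (u_iso v) = 0)}"

definition act_rest where "act_rest a y = act a y - proj_W (act a y)"

definition lift_j where "lift_j x = (SOME e. e \<in> G (Suc j) \<and> \<pi> j e = x)"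

definition \<psi>U where "\<psi>U x = proj_U (lift_j x)"

lemma proj_U_add: "proj_U (x + y) = proj_U x + proj_U y"
  unfolding proj_U_def by (simp add: b_add_right E.scale_left_distrib sum.distrib)

lemma proj_U_scale: "proj_U (sE c x) = sE c (proj_U x)"
  unfolding proj_U_def by (simp add: b_scale_right E.scale_sum_right)

lemma proj_U_diff: "proj_U (x - y) = proj_U x - proj_U y"
  using proj_U_add[of "x - y" y] by simp

lemma proj_W_add: "proj_W (x + y) = proj_W x + proj_W y"
  unfolding proj_W_def by (simp add: b_add_left E.scale_left_distrib sum.distrib)

lemma proj_W_mem: "proj_W y \<in> W"
  unfolding proj_W_def using B_basis(1)
  by (intro E.subspace_sum[OF W_subspace] E.subspace_scale[OF W_subspace]) auto

lemma proj_U_mem: "proj_U y \<in> U"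
  unfolding proj_U_def U_def by (intro E.span_sum E.span_scale E.span_base) auto

lemma proj_U_K: "k \<in> K \<Longrightarrow> proj_U k = 0"
  unfolding proj_U_def using K_iff_orthogonal_B K_subset_Y by auto

lemma lift_j: "x \<in> Fs (\<sigma> j) \<Longrightarrow> lift_j x \<in> G (Suc j) \<and> \<pi> j (lift_j x) = x"
proof -
  assume "x \<in> Fs (\<sigma> j)"
  then have "\<exists>e. e \<in> G (Suc j) \<and> \<pi> j e = x" using \<pi>_image[OF j_in_I] by (metis imageE)
  then show ?thesis unfolding lift_j_def by (rule someI_ex)
qed

lemma \<pi>_j_mem: "e \<in> G (Suc j) \<Longrightarrow> \<pi> j e \<in> Fs (\<sigma> j)"
  using \<pi>_image[OF j_in_I] by blast

lemma G_Suc_j_subset_Y: "G (Suc j) \<subseteq> Y" using G_subset_Y j_less_m by simp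

lemma proj_U_G_Suc_j:
  assumes "e \<in> G (Suc j)" "e' \<in> G (Suc j)" "\<pi> j e = \<pi> j e'" shows "proj_U e = proj_U e'"
proof -
  have "e - e' \<in> {x\<in>G (Suc j). \<pi> j x = 0}"
    using \<pi>_diff[OF j_in_I assms(1,2)] assms E.subspace_diff[OF G_subspace] j_less_m by simp
  then have "e - e' \<in> K" using \<pi>_kernel[OF j_in_I] G_j_subset_K by blast
  then show ?thesis using proj_U_K proj_U_diff by fastforce
qed

lemma \<psi>U_\<pi>: "e \<in> G (Suc j) \<Longrightarrow> \<psi>U (\<pi> j e) = proj_U e"
  unfolding \<psi>U_def using lift_j[OF \<pi>_j_mem] proj_U_G_Suc_j by blast

lemma \<psi>U_hom:
  assumes x: "x \<in> Fs (\<sigma> j)"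
  shows "y \<in> Fs (\<sigma> j) \<Longrightarrow> \<psi>U (x + y) = \<psi>U x + \<psi>U y"
    and "\<psi>U (sF c x) = sE c (\<psi>U x)"
    and "\<psi>U (actF a x) = proj_U (act a (lift_j x))"
proof -
  note ex = lift_j[OF x] and Gj = G_subspace[of "Suc j"] j_less_m
  show "y \<in> Fs (\<sigma> j) \<Longrightarrow> \<psi>U (x + y) = \<psi>U x + \<psi>U y"
  proof -
    assume y: "y \<in> Fs (\<sigma> j)"
    note ey = lift_j[OF y]
    have "lift_j x + lift_j y \<in> G (Suc j)" using E.subspace_add ex ey Gj by simp
    moreover have "\<pi> j (lift_j x + lift_j y) = x + y" using \<pi>_add[OF j_in_I] ex ey by simp
    ultimately show ?thesis using \<psi>U_\<pi> proj_U_add unfolding \<psi>U_def by metis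
  qed
  have "sE c (lift_j x) \<in> G (Suc j)" using E.subspace_scale ex Gj by simp
  moreover have "\<pi> j (sE c (lift_j x)) = sF c x" using \<pi>_scale[OF j_in_I] ex by simp
  ultimately show "\<psi>U (sF c x) = sE c (\<psi>U x)" using \<psi>U_\<pi> proj_U_scale unfolding \<psi>U_def by metis
  have "act a (lift_j x) \<in> G (Suc j)" using G_act ex j_less_m by simp
  moreover have "\<pi> j (act a (lift_j x)) = actF a x" using \<pi>_act[OF j_in_I] ex by simp
  ultimately show "\<psi>U (actF a x) = proj_U (act a (lift_j x))" using \<psi>U_\<pi> by metis
qed

lemma \<sigma>_i0_neq_\<sigma>_j: "i0 \<noteq> j \<Longrightarrow> \<sigma> i0 \<noteq> \<sigma> j"
  using inj_\<sigma> i0_in_I j_in_I unfolding inj_on_def by blast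

context
  assumes W_subset_K: "W \<subseteq> K"
begin

lemma j_neq_i0: "j \<noteq> i0"
proof
  assume "j = i0"
  then have "G (Suc i0) \<inter> K \<subseteq> G i0" using G_Suc_j_Int_K by simp
  then have "W \<subseteq> G i0" using W_subset_K unfolding W_def by blast
  then show False using G_below_i0[of i0] W_nonzero W_subspace E.subspace_0 by blast
qed

lemma W_isotropic: "w \<in> W \<Longrightarrow> w' \<in> W \<Longrightarrow> b w w' = 0"
  using W_subset_K W_orthogonal_K by blast

lemma u_iso: "(\<forall>v\<in>B. u_iso v \<in> Y) \<and> (\<forall>v\<in>B. \<forall>v'\<in>B. b v (u_iso v') = of_bool (v = v'))
     \<and> (\<forall>v\<in>B. \<forall>v'\<in>B. b (u_iso v) (u_iso v') = 0)"
proof -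
  have "\<forall>v\<in>B. \<forall>v'\<in>B. b v v' = 0" using W_isotropic B_basis(1) by blast
  moreover have "\<forall>v\<in>B. u v \<in> Y" "\<forall>v\<in>B. \<forall>v'\<in>B. b v (u v') = of_bool (v = v')"
    using u_mem b_B_u by blast+
  ultimately have "\<exists>u'. (\<forall>v\<in>B. u' v \<in> Y) \<and> (\<forall>v\<in>B. \<forall>v'\<in>B. b v (u' v') = of_bool (v = v'))
     \<and> (\<forall>v\<in>B. \<forall>v'\<in>B. b (u' v) (u' v') = 0)"
    by (rule exists_isotropic_dual_family[OF subspace_Y finite_B B_subset_Y])
  then show ?thesis unfolding u_iso_def by (rule someI_ex)
qed

lemma u_iso_mem: "v \<in> B \<Longrightarrow> u_iso v \<in> Y"
  and b_B_u_iso: "v \<in> B \<Longrightarrow> v' \<in> B \<Longrightarrow> b v (u_iso v') = of_bool (v = v')"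
  and u_iso_isotropic: "v \<in> B \<Longrightarrow> v' \<in> B \<Longrightarrow> b (u_iso v) (u_iso v') = 0"
  using u_iso by blast+

lemma b_B_W: "v \<in> B \<Longrightarrow> w \<in> W \<Longrightarrow> b v w = 0" using B_basis(1) W_isotropic by blast

lemma U_subspace: "E.subspace U" unfolding U_def by simp

lemma U_subset_Y: "U \<subseteq> Y"
  unfolding U_def using u_iso_mem subspace_Y E.span_minimal[of "u_iso ` B" Y] by blast

lemma proj_U_Y: "proj_U y \<in> Y" using proj_U_mem U_subset_Y by blast

lemma b_B_proj_U: "v \<in> B \<Longrightarrow> b v (proj_U y) = b v y"
  unfolding proj_U_def using b_B_u_iso finite_B by (simp add: b_simps)

lemma b_proj_W_u_iso: "v \<in> B \<Longrightarrow> b (proj_W y) (u_iso v) = b y (u_iso v)"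
  unfolding proj_W_def using b_B_u_iso finite_B by (simp add: b_simps)

lemma b_proj_U_u_iso: "v \<in> B \<Longrightarrow> b (proj_U y) (u_iso v) = 0"
  unfolding proj_U_def using u_iso_isotropic by (simp add: b_simps)

lemma b_B_proj_W: "v \<in> B \<Longrightarrow> b v (proj_W y) = 0"
  unfolding proj_W_def using b_B_W B_basis(1) by (simp add: b_simps subset_iff)

lemma residual_in_Y_rest: "y \<in> Y \<Longrightarrow> y - proj_U y - proj_W y \<in> Y_rest"
  unfolding Y_rest_def
  using proj_U_Y proj_W_mem W_subset_Y E.subspace_diff[OF subspace_Y]
    b_B_proj_U b_B_proj_W b_proj_U_u_iso b_proj_W_u_iso
  by (auto simp: b_diff_left b_diff_right subset_iff)

lemma K_residual_in_Y_rest: "k \<in> K \<Longrightarrow> k - proj_W k \<in> Y_rest"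
  using residual_in_Y_rest[of k] proj_U_K[of k] K_subset_Y by auto

lemma Y_rest_subset_K: "Y_rest \<subseteq> K" unfolding Y_rest_def using K_iff_orthogonal_B by blast

lemma Y_rest_subset_Y: "Y_rest \<subseteq> Y" unfolding Y_rest_def by blast

lemma Y_rest_subspace: "E.subspace Y_rest"
  unfolding E.subspace_def Y_rest_def
  using subspace_Y E.subspace_0 E.subspace_add E.subspace_scale by (auto simp: b_simps)

lemma U_orthogonal_Y_rest: "x \<in> U \<Longrightarrow> y \<in> Y_rest \<Longrightarrow> b x y = 0"
  unfolding U_def
proof (induction rule: E.span_induct_alt)
  case (step c x z)
  then obtain v where "v \<in> B" "x = u_iso v" by blast
  moreover have "b y (u_iso v) = 0" using \<open>v \<in> B\<close> step(3) unfolding Y_rest_def by blast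
  ultimately have "b x y = 0" by (metis b_swap mult_zero_right)
  then show ?case using step by (simp add: b_add_left b_scale_left)
qed simp

lemma U_isotropic: "x \<in> U \<Longrightarrow> y \<in> U \<Longrightarrow> b x y = 0"
proof -
  assume x: "x \<in> U" and y: "y \<in> U"
  have u_iso_U: "b (u_iso v) y = 0" if "v \<in> B" for v
    using y unfolding U_def
    by (induction rule: E.span_induct_alt) (use u_iso_isotropic that in \<open>auto simp: b_simps\<close>)
  from x show ?thesis
    unfolding U_def by (induction rule: E.span_induct_alt) (auto simp: b_simps u_iso_U)
qed

lemma proj_U_id: "x \<in> U \<Longrightarrow> proj_U x = x"
  unfolding U_def
proof (induction rule: E.span_induct_alt)
  case base
  then show ?case using proj_U_scale[of 0 0] by simp
next
  case (step c x z)
  then obtain v where v: "v \<in> B" "x = u_iso v" by blast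
  have "proj_U (u_iso v) = (\<Sum>v'\<in>B. if v' = v then u_iso v' else 0)"
    unfolding proj_U_def using b_B_u_iso v(1) by (intro sum.cong) auto
  also have "\<dots> = u_iso v" using finite_B v(1) by (simp add: sum.delta')
  finally show ?case using step v by (simp add: proj_U_add proj_U_scale)
qed

lemma nondegenerate_via_Y_rest:
  assumes "x \<in> Y" "b x (proj_U y) = 0" "b x (proj_W y) = 0" "\<forall>z\<in>Y_rest. b x z = 0" "y \<in> Y"
  shows "b x y = 0"
proof -
  have "y = proj_U y + proj_W y + (y - proj_U y - proj_W y)" by simp
  then show ?thesis using assms residual_in_Y_rest[OF assms(5)] by (metis b_add_right add_0)
qed

lemma W_Int_Y_rest: "W \<inter> Y_rest = {0}"
proof
  show "W \<inter> Y_rest \<subseteq> {0}"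
  proof
    fix w assume w: "w \<in> W \<inter> Y_rest"
    have "b w (proj_U y) = 0" for y unfolding proj_U_def using w unfolding Y_rest_def by (simp add: b_simps)
    moreover have "b w (proj_W y) = 0" for y using w proj_W_mem W_isotropic by blast
    moreover have "\<forall>z\<in>Y_rest. b w z = 0" using w W_orthogonal_K Y_rest_subset_K by blast
    ultimately have "\<forall>y\<in>Y. b w y = 0" using nondegenerate_via_Y_rest w W_subset_Y by blast
    then show "w \<in> {0}" using nondegenerate_Y w W_subset_Y by blast
  qed
  show "{0} \<subseteq> W \<inter> Y_rest" using E.subspace_0[OF W_subspace] E.subspace_0[OF Y_rest_subspace] by blast
qed

lemma nondegenerate_filtration_Y_rest:
  "nondegenerate_filtration sE b sF actF invl Fs Y_rest act_rest m (\<lambda>i. G i \<inter> Y_rest) (I - {i0, j}) \<sigma> \<pi>"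
proof (rule nondegenerate_filtration_Int)
  show "K \<subseteq> W + Y_rest"
  proof
    fix k assume "k \<in> K"
    then have "proj_W k + (k - proj_W k) \<in> W + Y_rest"
      using proj_W_mem K_residual_in_Y_rest by blast
    then show "k \<in> W + Y_rest" by simp
  qed
  show "act_rest a y \<in> Y_rest" if "y \<in> Y_rest" for a y
    unfolding act_rest_def using K_residual_in_Y_rest K_act Y_rest_subset_K that by blast
  show "act a y - act_rest a y \<in> W" for a y unfolding act_rest_def using proj_W_mem by simp
  show "act_rest a (x + y) = act_rest a x + act_rest a y" if "x \<in> Y_rest" "y \<in> Y_rest" for a x y
    unfolding act_rest_def using act_add Y_rest_subset_Y that proj_W_add by (simp add: subset_iff)
  show "b (act_rest a x) y = b x (act_rest (invl a) y)" if xy: "x \<in> Y_rest" "y \<in> Y_rest" for a x y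
  proof -
    have "b (proj_W z) y = 0" "b x (proj_W z) = 0" for z
      using xy Y_rest_subset_K W_orthogonal_K K_orthogonal_W proj_W_mem by blast+
    moreover have "b (act a x) y = b x (act (invl a) y)" using act_adjoint xy Y_rest_subset_Y by blast
    ultimately show ?thesis unfolding act_rest_def by (simp add: b_diff_left b_diff_right)
  qed
  show "x = 0" if x: "x \<in> Y_rest" "\<forall>y\<in>Y_rest. b x y = 0" for x
  proof -
    have "b x (proj_U y) = 0" for y unfolding proj_U_def using x unfolding Y_rest_def by (simp add: b_simps)
    moreover have "b x (proj_W y) = 0" for y using x Y_rest_subset_K K_orthogonal_W proj_W_mem by blast
    ultimately have "\<forall>y\<in>Y. b x y = 0" using nondegenerate_via_Y_rest x Y_rest_subset_Y by blast
    then show ?thesis using nondegenerate_Y x Y_rest_subset_Y by blast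
  qed
qed (use Y_rest_subspace Y_rest_subset_K W_Int_Y_rest in auto)

lemma b_W_proj_U: "w \<in> W \<Longrightarrow> e \<in> Y \<Longrightarrow> b w (proj_U e) = b w e"
  and b_proj_U_W: "w \<in> W \<Longrightarrow> e \<in> Y \<Longrightarrow> b (proj_U e) w = b e w"
proof -
  assume w: "w \<in> W" and e: "e \<in> Y"
  have "e - proj_U e \<in> Y" using e proj_U_Y E.subspace_diff[OF subspace_Y] by blast
  then have "e - proj_U e \<in> K" using K_iff_orthogonal_B b_B_proj_U by (simp add: b_diff_right)
  then have "b w (e - proj_U e) = 0" "b (e - proj_U e) w = 0"
    using w W_orthogonal_K K_orthogonal_W by blast+
  then show "b w (proj_U e) = b w e" "b (proj_U e) w = b e w" by (simp_all add: b_simps)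
qed

lemma adjoint_W_U:
  assumes x: "x \<in> Fs (\<sigma> i0)" and y: "y \<in> Fs (\<sigma> j)"
  shows "b (\<psi>W (actF a x)) (\<psi>U y) = b (\<psi>W x) (\<psi>U (actF (invl a) y))"
proof -
  note w = \<psi>W_mem[OF x] and e = lift_j[OF y, THEN conjunct1]
  have e_Y: "lift_j y \<in> Y" "act (invl a) (lift_j y) \<in> Y" using e G_Suc_j_subset_Y act_closed by blast+
  have "b (\<psi>W (actF a x)) (\<psi>U y) = b (act a (\<psi>W x)) (lift_j y)"
    unfolding \<psi>W_hom(3)[OF x] \<psi>U_def using b_W_proj_U[OF W_act[OF w] e_Y(1)] .
  also have "\<dots> = b (\<psi>W x) (act (invl a) (lift_j y))"
    using act_adjoint w W_subset_Y e_Y(1) by blast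
  also have "\<dots> = b (\<psi>W x) (\<psi>U (actF (invl a) y))"
    unfolding \<psi>U_hom(3)[OF y] using b_W_proj_U[OF w e_Y(2)] by simp
  finally show ?thesis .
qed

lemma adjoint_U_W:
  assumes x: "x \<in> Fs (\<sigma> j)" and y: "y \<in> Fs (\<sigma> i0)"
  shows "b (\<psi>U (actF a x)) (\<psi>W y) = b (\<psi>U x) (\<psi>W (actF (invl a) y))"
proof -
  note w = \<psi>W_mem[OF y] and e = lift_j[OF x, THEN conjunct1]
  have e_Y: "lift_j x \<in> Y" "act a (lift_j x) \<in> Y" using e G_Suc_j_subset_Y act_closed by blast+
  have "b (\<psi>U (actF a x)) (\<psi>W y) = b (act a (lift_j x)) (\<psi>W y)"
    unfolding \<psi>U_hom(3)[OF x] using b_proj_U_W[OF w e_Y(2)] .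
  also have "\<dots> = b (lift_j x) (act (invl a) (\<psi>W y))"
    using act_adjoint w W_subset_Y e_Y(1) by blast
  also have "\<dots> = b (\<psi>U x) (\<psi>W (actF (invl a) y))"
    unfolding \<psi>W_hom(3)[OF y] \<psi>U_def using b_proj_U_W[OF W_act[OF w] e_Y(1)] by simp
  finally show ?thesis .
qed

lemma \<psi>U_\<pi>_U: "x \<in> U \<Longrightarrow> \<exists>e\<in>G (Suc j). \<psi>U (\<pi> j e) = x"
proof -
  assume x: "x \<in> U"
  then have "x \<in> G (Suc j) + K" using G_Suc_j_plus_K U_subset_Y by blast
  then obtain e k where ek: "x = e + k" "e \<in> G (Suc j)" "k \<in> K" by (rule set_plus_elim)
  then have "proj_U x = proj_U e" using proj_U_add proj_U_K by simp
  then show ?thesis using ek(2) \<psi>U_\<pi> proj_U_id[OF x] by metis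
qed

lemma hyperbolic_independent:
  assumes x: "x \<in> Fs (\<sigma> i0)" and y: "y \<in> Fs (\<sigma> j)" and sum0: "\<psi>W x + \<psi>U y = 0"
  shows "x = 0" "y = 0"
proof -
  define e where "e = lift_j y"
  have w: "\<psi>W x \<in> W" using \<psi>W_mem[OF x] .
  have e: "e \<in> G (Suc j)" "\<pi> j e = y" using lift_j[OF y] unfolding e_def by auto
  have "b v e = 0" if "v \<in> B" for v
    using arg_cong[OF sum0, of "b v"] b_B_W[OF that w] b_B_proj_U[OF that]
    unfolding \<psi>U_def e_def[symmetric] by (simp add: b_add_right)
  then have "e \<in> K" using K_iff_orthogonal_B G_Suc_j_subset_Y e(1) by blast
  then have "e \<in> G j" using G_Suc_j_Int_K e(1) by blast
  then show "y = 0" using \<pi>_kernel[OF j_in_I] e by (metis (mono_tags, lifting) mem_Collect_eq)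
  have "\<psi>W x = 0" using sum0 proj_U_K[OF \<open>e \<in> K\<close>] unfolding \<psi>U_def e_def[symmetric] by simp
  then show "x = 0" using \<pi>_\<psi>W[OF x] \<pi>_zero[OF i0_in_I] by metis
qed

lemma compatible_decomposition_hyperbolic:
  "compatible_decomposition (W + U) {\<sigma> i0, \<sigma> j} (\<lambda>t. if t = \<sigma> i0 then \<psi>W else \<psi>U)"
  (is "compatible_decomposition _ _ ?\<psi>")
proof -
  have ne: "\<sigma> i0 \<noteq> \<sigma> j" using \<sigma>_i0_neq_\<sigma>_j j_neq_i0 by auto
  have W_WU: "W \<subseteq> W + U" and U_WU: "U \<subseteq> W + U"
    using E.subset_set_plus_left[OF U_subspace] E.subset_set_plus_right[OF W_subspace] .
  show ?thesis unfolding compatible_decomposition_def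
  proof (intro conjI ballI allI impI)
    fix t x assume "t \<in> {\<sigma> i0, \<sigma> j}" "x \<in> Fs t"
    then show "?\<psi> t x \<in> W + U" using \<psi>W_mem W_WU proj_U_mem U_WU unfolding \<psi>U_def by auto
  next
    fix t x y assume "t \<in> {\<sigma> i0, \<sigma> j}" "x \<in> Fs t" "y \<in> Fs t"
    then show "?\<psi> t (x + y) = ?\<psi> t x + ?\<psi> t y" using \<psi>W_hom(1) \<psi>U_hom(1) by auto
  next
    fix t c x assume "t \<in> {\<sigma> i0, \<sigma> j}" "x \<in> Fs t"
    then show "?\<psi> t (sF c x) = sE c (?\<psi> t x)" using \<psi>W_hom(2) \<psi>U_hom(2) by auto
  next
    fix z assume "z \<in> W + U"
    then obtain w x where wx: "z = w + x" "w \<in> W" "x \<in> U" by (rule set_plus_elim)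
    obtain e where e: "e \<in> G (Suc j)" "\<psi>U (\<pi> j e) = x" using \<psi>U_\<pi>_U[OF wx(3)] by blast
    define xs where "xs t = (if t = \<sigma> i0 then \<pi> i0 w else \<pi> j e)" for t
    have "\<forall>t\<in>{\<sigma> i0, \<sigma> j}. xs t \<in> Fs t"
      unfolding xs_def using \<pi>_i0_image wx(2) \<pi>_j_mem[OF e(1)] ne by auto
    moreover have "z = (\<Sum>t\<in>{\<sigma> i0, \<sigma> j}. ?\<psi> t (xs t))"
      unfolding xs_def using ne e(2) \<psi>W_\<pi>[OF wx(2)] wx(1) by simp
    ultimately show "\<exists>xs. (\<forall>t\<in>{\<sigma> i0, \<sigma> j}. xs t \<in> Fs t) \<and> z = (\<Sum>t\<in>{\<sigma> i0, \<sigma> j}. ?\<psi> t (xs t))"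
      by blast
  next
    fix xs t assume xs: "(\<forall>t\<in>{\<sigma> i0, \<sigma> j}. xs t \<in> Fs t) \<and> (\<Sum>t\<in>{\<sigma> i0, \<sigma> j}. ?\<psi> t (xs t)) = 0"
      and t: "t \<in> {\<sigma> i0, \<sigma> j}"
    have "xs (\<sigma> i0) \<in> Fs (\<sigma> i0)" "xs (\<sigma> j) \<in> Fs (\<sigma> j)"
      "\<psi>W (xs (\<sigma> i0)) + \<psi>U (xs (\<sigma> j)) = 0" using xs ne by auto
    then have "xs (\<sigma> i0) = 0" "xs (\<sigma> j) = 0" using hyperbolic_independent by blast+
    then show "xs t = 0" using t by auto
  next
    fix s t a x y assume st: "s \<in> {\<sigma> i0, \<sigma> j}" "t \<in> {\<sigma> i0, \<sigma> j}" and xy: "x \<in> Fs s" "y \<in> Fs t"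
    show "b (?\<psi> s (actF a x)) (?\<psi> t y) = b (?\<psi> s x) (?\<psi> t (actF (invl a) y))"
    proof (cases "s = \<sigma> i0"; cases "t = \<sigma> i0")
      assume "s = \<sigma> i0" "t = \<sigma> i0"
      then show ?thesis using compatible_decomposition_adjoint[OF compatible_decomposition_W] xy by simp
    next
      assume "s = \<sigma> i0" "t \<noteq> \<sigma> i0"
      then show ?thesis using adjoint_W_U st xy ne by auto
    next
      assume "s \<noteq> \<sigma> i0" "t = \<sigma> i0"
      then show ?thesis using adjoint_U_W st xy ne by auto
    next
      assume "s \<noteq> \<sigma> i0" "t \<noteq> \<sigma> i0"
      then show ?thesis using U_isotropic proj_U_mem unfolding \<psi>U_def by simp
    qed
  qed
qed

lemma W_plus_U_plus_Y_rest: "W + U + Y_rest = Y"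
proof
  show "W + U + Y_rest \<subseteq> Y"
    using W_subset_Y U_subset_Y Y_rest_subset_Y E.subspace_add[OF subspace_Y] by (blast elim!: set_plus_elim)
  show "Y \<subseteq> W + U + Y_rest"
  proof
    fix y assume "y \<in> Y"
    then have "(proj_W y + proj_U y) + (y - proj_U y - proj_W y) \<in> W + U + Y_rest"
      using proj_W_mem proj_U_mem residual_in_Y_rest by blast
    then show "y \<in> W + U + Y_rest" by simp
  qed
qed

lemma W_plus_U_orthogonal_Y_rest: "\<forall>x\<in>W + U. \<forall>y\<in>Y_rest. b x y = 0"
  using W_orthogonal_K Y_rest_subset_K U_orthogonal_Y_rest by (auto elim!: set_plus_elim simp: b_add_left)

lemma W_plus_U_Int_Y_rest: "(W + U) \<inter> Y_rest = {0}"
proof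
  show "(W + U) \<inter> Y_rest \<subseteq> {0}"
  proof
    fix x assume x: "x \<in> (W + U) \<inter> Y_rest"
    then obtain w z where wz: "x = w + z" "w \<in> W" "z \<in> U" by (auto elim: set_plus_elim)
    have "b v z = 0" if "v \<in> B" for v
      using x wz that b_B_W unfolding Y_rest_def by (auto simp: b_add_right)
    then have "proj_U z = 0" unfolding proj_U_def by simp
    then have "z = 0" using proj_U_id[OF wz(3)] by simp
    then have "w \<in> W \<inter> Y_rest" using wz x by simp
    then show "x \<in> {0}" using W_Int_Y_rest \<open>z = 0\<close> wz by auto
  qed
  show "{0} \<subseteq> (W + U) \<inter> Y_rest"
    using E.subspace_0[OF E.subspace_set_plus[OF W_subspace U_subspace]] E.subspace_0[OF Y_rest_subspace]
    by blast
qed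

lemma compatible_decomposition_isotropic:
  assumes "compatible_decomposition Y_rest (\<sigma> ` (I - {i0, j})) \<psi>R"
  shows "\<exists>\<psi>. compatible_decomposition Y (\<sigma> ` I) \<psi>"
proof -
  have T: "\<sigma> ` I = {\<sigma> i0, \<sigma> j} \<union> \<sigma> ` (I - {i0, j})" using \<sigma>_I_split by simp
  have "compatible_decomposition Y ({\<sigma> i0, \<sigma> j} \<union> \<sigma> ` (I - {i0, j}))
      (\<lambda>t. if t \<in> {\<sigma> i0, \<sigma> j} then (if t = \<sigma> i0 then \<psi>W else \<psi>U) else \<psi>R t)"
    using compatible_decomposition_orthogonal_sum[OF compatible_decomposition_hyperbolic assms]
      \<sigma>_disjoint finite_I E.subspace_set_plus[OF W_subspace U_subspace] Y_rest_subspace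
      W_plus_U_Int_Y_rest W_plus_U_plus_Y_rest W_plus_U_orthogonal_Y_rest Fs_\<sigma>_invariant T
    by simp
  then show ?thesis using T by auto
qed

end

end

context form_and_factors
begin

theorem compatible_decomposition_exists:
  "nondegenerate_filtration sE b sF actF invl Fs Y act m G I \<sigma> \<pi> \<Longrightarrow>
    \<exists>\<psi>. compatible_decomposition Y (\<sigma> ` I) \<psi>"
proof (induction "card I" arbitrary: Y act G I rule: less_induct)
  case less
  interpret nondegenerate_filtration sE b sF actF invl Fs Y act m G I \<sigma> \<pi> by (rule less.prems)
  show ?case
  proof (cases "I = {}")
    case True
    then show ?thesis using Y_trivial_if_I_empty unfolding compatible_decomposition_def by auto
  next
    case False
    interpret S: nontrivial_filtration sE b sF actF invl Fs Y act m G I \<sigma> \<pi>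
      by (intro nontrivial_filtration.intro[OF less.prems] nontrivial_filtration_axioms.intro False)
    have card: "card (I - {S.i0, S.j}) < card I"
      using S.i0_in_I finite_I by (intro psubset_card_mono) auto
    have "invariant_subspace Y act (S.W \<inter> S.K)"
      using invariant_subspace_Int[OF S.W_invariant S.K_invariant] .
    then consider "S.W \<inter> S.K = {0}" | "S.W \<subseteq> S.K" using S.W_simple by blast
    then show ?thesis
    proof cases
      case 1
      then show ?thesis using less.hyps[OF card S.nondegenerate_filtration_K[OF 1]]
          S.compatible_decomposition_anisotropic[OF 1] by blast
    next
      case 2
      then show ?thesis using less.hyps[OF card S.nondegenerate_filtration_Y_rest[OF 2]]
          S.compatible_decomposition_isotropic[OF 2] by blast
    qed
  qed
qed

end

lemma internal_direct_sum_components: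
  fixes sF :: "'k::field \<Rightarrow> 'f::ab_group_add \<Rightarrow> 'f"
  assumes F: "Vector_Spaces.vector_space sF"
    and actF_add: "\<And>a x y. actF a (x + y) = actF a x + actF a y"
    and DS: "internal_direct_sum sF actF n Fs"
  obtains dec where "\<And>x i. i < n \<Longrightarrow> dec x i \<in> Fs i" and "\<And>x. (\<Sum>i<n. dec x i) = x"
    and "\<And>x y i. i < n \<Longrightarrow> dec (x + y) i = dec x i + dec y i"
    and "\<And>c x i. i < n \<Longrightarrow> dec (sF c x) i = sF c (dec x i)"
    and "\<And>a x i. i < n \<Longrightarrow> dec (actF a x) i = actF a (dec x i)"
    and "\<And>xs i. \<forall>i<n. xs i \<in> Fs i \<Longrightarrow> i < n \<Longrightarrow> dec (\<Sum>i<n. xs i) i = xs i"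
proof -
  interpret F: vector_space sF by (rule F)
  have Fs: "\<And>i. i < n \<Longrightarrow> F.subspace (Fs i)" "\<And>i a x. i < n \<Longrightarrow> x \<in> Fs i \<Longrightarrow> actF a x \<in> Fs i"
    and spans: "\<forall>x. \<exists>xs. (\<forall>i<n. xs i \<in> Fs i) \<and> x = (\<Sum>i<n. xs i)"
    and indep: "\<forall>xs. (\<forall>i<n. xs i \<in> Fs i) \<and> (\<Sum>i<n. xs i) = 0 \<longrightarrow> (\<forall>i<n. xs i = 0)"
    using DS unfolding internal_direct_sum_def submodule_def by blast+
  obtain dec where dec: "\<And>i x. i < n \<Longrightarrow> dec x i \<in> Fs i" "\<And>x. (\<Sum>i<n. dec x i) = x"
    using spans by metis
  have unique: "dec x i = xs i" if "\<forall>i<n. xs i \<in> Fs i" "(\<Sum>i<n. xs i) = x" "i < n" for x xs i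
  proof -
    have "(\<Sum>i<n. xs i - dec x i) = 0" using that(2) dec(2)[of x] by (simp add: sum_subtractf)
    moreover have "\<forall>i<n. xs i - dec x i \<in> Fs i" using F.subspace_diff Fs(1) that(1) dec(1) by blast
    ultimately show ?thesis using indep that(3) by fastforce
  qed
  have actF_sum: "actF a (\<Sum>i<n. f i) = (\<Sum>i<n. actF a (f i))" for a f
    using additive.sum[of "actF a"] actF_add by (simp add: additive.intro)
  show ?thesis
  proof (rule that)
    show "dec (x + y) i = dec x i + dec y i" if "i < n" for x y i
    proof (rule unique[OF _ _ that])
      show "\<forall>i<n. dec x i + dec y i \<in> Fs i" using dec(1) F.subspace_add Fs(1) by blast
      show "(\<Sum>i<n. dec x i + dec y i) = x + y" by (simp add: sum.distrib dec(2))
    qed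
    show "dec (sF c x) i = sF c (dec x i)" if "i < n" for c x i
    proof (rule unique[OF _ _ that])
      show "\<forall>i<n. sF c (dec x i) \<in> Fs i" using dec(1) F.subspace_scale Fs(1) by blast
      show "(\<Sum>i<n. sF c (dec x i)) = sF c x" by (simp add: F.scale_sum_right[symmetric] dec(2))
    qed
    show "dec (actF a x) i = actF a (dec x i)" if "i < n" for a x i
    proof (rule unique[OF _ _ that])
      show "\<forall>i<n. actF a (dec x i) \<in> Fs i" using dec(1) Fs(2) by blast
      show "(\<Sum>i<n. actF a (dec x i)) = actF a x" by (simp add: actF_sum[symmetric] dec(2))
    qed
    show "dec (\<Sum>i<n. xs i) i = xs i" if "\<forall>i<n. xs i \<in> Fs i" "i < n" for xs i
      using unique[OF that(1) refl that(2)] .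
  qed (use dec in auto)
qed

context form_and_factors
begin

lemma compatible_isomorphism:
  assumes F: "Vector_Spaces.vector_space sF"
    and actF_add: "\<And>a x y. actF a (x + y) = actF a x + actF a y"
    and DS: "internal_direct_sum sF actF n Fs"
    and dec: "compatible_decomposition UNIV {..<n} \<psi>"
  shows "\<exists>\<phi>. Vector_Spaces.linear sF sE \<phi> \<and> bij \<phi> \<and>
    (\<forall>a x y. b (\<phi> (actF a x)) (\<phi> y) = b (\<phi> x) (\<phi> (actF (invl a) y)))"
proof -
  obtain c where c_mem: "\<And>x i. i < n \<Longrightarrow> c x i \<in> Fs i" and c_sum: "\<And>x. (\<Sum>i<n. c x i) = x"
    and c_add: "\<And>x y i. i < n \<Longrightarrow> c (x + y) i = c x i + c y i"
    and c_scale: "\<And>k x i. i < n \<Longrightarrow> c (sF k x) i = sF k (c x i)"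
    and c_act: "\<And>a x i. i < n \<Longrightarrow> c (actF a x) i = actF a (c x i)"
    and c_unique: "\<And>xs i. \<forall>i<n. xs i \<in> Fs i \<Longrightarrow> i < n \<Longrightarrow> c (\<Sum>i<n. xs i) i = xs i"
    by (rule internal_direct_sum_components[OF F actF_add DS]) blast
  note \<psi>_add = compatible_decomposition_add[OF dec] and \<psi>_scale = compatible_decomposition_scale[OF dec]
  define \<phi> where "\<phi> x = (\<Sum>i<n. \<psi> i (c x i))" for x
  have \<phi>_add: "\<phi> (x + y) = \<phi> x + \<phi> y" for x y
    unfolding \<phi>_def using c_add c_mem \<psi>_add by (simp add: sum.distrib)
  have \<phi>_scale: "\<phi> (sF k x) = sE k (\<phi> x)" for k x
    unfolding \<phi>_def using c_scale c_mem \<psi>_scale by (simp add: E.scale_sum_right)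
  have "inj \<phi>"
  proof (rule injI)
    fix x y assume "\<phi> x = \<phi> y"
    then have "(\<Sum>i<n. \<psi> i (c (x - y) i)) = 0"
      using \<phi>_add[of "x - y" y] unfolding \<phi>_def[symmetric] by simp
    then have "\<forall>i<n. c (x - y) i = 0"
      using compatible_decomposition_independent[OF dec] c_mem by blast
    then show "x = y" using c_sum[of "x - y"] by simp
  qed
  moreover have "surj \<phi>"
  proof -
    have "z \<in> range \<phi>" for z
    proof -
      obtain xs where "\<forall>i\<in>{..<n}. xs i \<in> Fs i" "z = (\<Sum>i<n. \<psi> i (xs i))"
        using compatible_decomposition_spans[OF dec] by blast
      then have "\<phi> (\<Sum>i<n. xs i) = z" unfolding \<phi>_def using c_unique by simp
      then show ?thesis by blast
    qed
    then show ?thesis by blast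
  qed
  moreover have "Vector_Spaces.linear sF sE \<phi>"
    unfolding Vector_Spaces.linear_iff using F vector_space \<phi>_add \<phi>_scale by blast
  moreover have "b (\<phi> (actF a x)) (\<phi> y) = b (\<phi> x) (\<phi> (actF (invl a) y))" for a x y
    unfolding \<phi>_def using compatible_decomposition_adjoint[OF dec] c_mem
    by (simp add: b_sum_left b_sum_right c_act)
  ultimately show ?thesis by (auto simp: bij_def)
qed


end
context form_and_factors
begin

lemma JH_filtration_nondegenerate_filtration:
  assumes adjoint: "adjoint_compatible actE invl b" and nondeg: "nondegenerate b"
    and actE_add: "\<And>a x y. actE a (x + y) = actE a x + actE a y"
    and JH: "JH_filtration sE actE n Es"
    and iso: "\<forall>i<n. iso_to_quotient sE actE sF actF (Fs i) (Es (Suc i)) (Es i)"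
  shows "\<exists>\<pi>. nondegenerate_filtration sE b sF actF invl Fs UNIV actE n Es {..<n} id \<pi>"
proof -
  define P where "P i p \<longleftrightarrow> (\<forall>x\<in>Es (Suc i). \<forall>y\<in>Es (Suc i). p (x + y) = p x + p y) \<and>
      (\<forall>c. \<forall>x\<in>Es (Suc i). p (sE c x) = sF c (p x)) \<and>
      (\<forall>a. \<forall>x\<in>Es (Suc i). p (actE a x) = actF a (p x)) \<and>
      p ` Es (Suc i) = Fs i \<and> {x\<in>Es (Suc i). p x = 0} = Es i" for i and p :: "'e \<Rightarrow> 'f"
  have "\<forall>i<n. \<exists>p. P i p" using iso unfolding iso_to_quotient_def P_def .
  then have "\<forall>i\<in>{..<n}. \<exists>p. P i p" by simp
  then have "\<exists>\<pi>. \<forall>i\<in>{..<n}. P i (\<pi> i)" by (rule bchoice)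
  then obtain \<pi> where \<pi>: "\<forall>i\<in>{..<n}. P i (\<pi> i)" ..
  have Es: "Es 0 = {0}" "Es n = UNIV" "\<And>i. i \<le> n \<Longrightarrow> submodule sE actE (Es i)"
    and simple: "\<And>i. i < n \<Longrightarrow> simple_quotient sE actE (Es (Suc i)) (Es i)"
    using JH unfolding JH_filtration_def by blast+
  have step: "Es i \<subset> Es (Suc i)" if "i < n" for i
    using simple[OF that] unfolding simple_quotient_def by blast
  have invariant_iff: "invariant_subspace UNIV actE M \<longleftrightarrow> submodule sE actE M" for M
    unfolding invariant_subspace_def submodule_def by blast
  show ?thesis
  proof (intro exI[of _ \<pi>] nondegenerate_filtration.intro[OF form_and_factors_axioms]
      nondegenerate_filtration_axioms.intro)
    show "{..<n} = {i. i < n \<and> Es (Suc i) \<noteq> Es i}" using step by auto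
    show "b (actE a x) y = b x (actE (invl a) y)" for a x y
      using adjoint unfolding adjoint_compatible_def by blast
    show "x = 0" if "\<forall>y\<in>UNIV. b x y = 0" for x using nondeg that unfolding nondegenerate_def by blast
    show "invariant_subspace UNIV actE (Es i)" if "i \<le> n" for i using Es(3) invariant_iff that by blast
    show False if "i < n" "invariant_subspace UNIV actE L" "Es i \<subset> L" "L \<subset> Es (Suc i)" for i L
      using simple[OF that(1)] invariant_iff that(2-4) unfolding simple_quotient_def by blast
    show "Es i \<subseteq> Es (Suc i)" if "i < n" for i using step[OF that] by blast
  qed (use Es(1,2) \<pi> actE_add in \<open>auto simp: P_def\<close>)
qed

end
lemma pullback_form:
  assumes b: "bilinear_form sE b" and \<phi>: "Vector_Spaces.linear sF sE \<phi>" "bij \<phi>"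
  shows "bilinear_form sF (\<lambda>x y. b (\<phi> x) (\<phi> y))" and "iso_forms sF (\<lambda>x y. b (\<phi> x) (\<phi> y)) sE b"
    and "symmetric_form b \<Longrightarrow> symmetric_form (\<lambda>x y. b (\<phi> x) (\<phi> y))"
    and "alternating_form b \<Longrightarrow> alternating_form (\<lambda>x y. b (\<phi> x) (\<phi> y))"
  using assms unfolding bilinear_form_def Vector_Spaces.linear_iff iso_forms_def symmetric_form_def
    alternating_form_def by auto

theorem theorem4p2p1:
  fixes sA :: "'k::field \<Rightarrow> 'a::ring_1 \<Rightarrow> 'a"
    and invl :: "'a \<Rightarrow> 'a"
    and sE :: "'k \<Rightarrow> 'e::ab_group_add \<Rightarrow> 'e" and actE :: "'a \<Rightarrow> 'e \<Rightarrow> 'e"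
    and b :: "'e \<Rightarrow> 'e \<Rightarrow> 'k"
    and sF :: "'k \<Rightarrow> 'f::ab_group_add \<Rightarrow> 'f" and actF :: "'a \<Rightarrow> 'f \<Rightarrow> 'f"
  assumes "k_algebra sA"
    and "k_involution sA invl"
    and "alg_module sA sE actE"
    and "fin_dim sE"
    and "bilinear_form sE b"
    and "nondegenerate b"
    and "adjoint_compatible actE invl b"
    and "alternating_form b \<or> (symmetric_form b \<and> (2::'k) \<noteq> 0)"
    and "alg_module sA sF actF"
    and "semisimplification sE actE sF actF"
  shows "\<exists>b'. bilinear_form sF b' \<and>
           (symmetric_form b \<longrightarrow> symmetric_form b') \<and>
           (alternating_form b \<longrightarrow> alternating_form b') \<and>
           adjoint_compatible actF invl b' \<and>
           iso_forms sF b' sE b"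
proof -
  have E: "Vector_Spaces.vector_space sE" and actE_add: "\<And>a x y. actE a (x + y) = actE a x + actE a y"
    using assms(3) unfolding alg_module_def by blast+
  have F: "Vector_Spaces.vector_space sF" and actF_add: "\<And>a x y. actF a (x + y) = actF a x + actF a y"
    using assms(9) unfolding alg_module_def by blast+
  obtain n Es Fs where JH: "JH_filtration sE actE n Es" and DS: "internal_direct_sum sF actF n Fs"
    and iso: "\<forall>i<n. iso_to_quotient sE actE sF actF (Fs i) (Es (Suc i)) (Es i)"
    using assms(10) unfolding semisimplification_def by blast
  interpret form_and_factors sE b sF actF invl Fs
  proof (intro form_and_factors.intro sym_alt_form.intro form_and_factors_axioms.intro E assms(4,5,8))
    show "invl (invl a) = a" for a using assms(2) unfolding k_involution_def by blast
  qed
  obtain \<pi> where "nondegenerate_filtration sE b sF actF invl Fs UNIV actE n Es {..<n} id \<pi>"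
    using JH_filtration_nondegenerate_filtration[OF assms(7,6) actE_add JH iso] by blast
  then have "\<exists>\<psi>. compatible_decomposition UNIV (id ` {..<n}) \<psi>" by (rule compatible_decomposition_exists)
  then obtain \<psi> where "compatible_decomposition UNIV {..<n} \<psi>" by auto
  then obtain \<phi> where \<phi>: "Vector_Spaces.linear sF sE \<phi>" "bij \<phi>"
    "\<forall>a x y. b (\<phi> (actF a x)) (\<phi> y) = b (\<phi> x) (\<phi> (actF (invl a) y))"
    using compatible_isomorphism[OF F actF_add DS] by blast
  then show ?thesis
    using pullback_form[OF assms(5)] unfolding adjoint_compatible_def by blast
qed

end
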